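(* Assume $L\in C^2(\mathbb{R}^2;\mathbb{R})$ is strictly convex in $v$, $\Psi\in C^1(\mathbb{R})$, and Assumptions (A5) and (A7) hold. Let $x_0\in\mathbb{R}$, $\varpi\in\mathbb{H}_{\mathbb{F}}$, and let $(X^*,P,Z)$ with $X^*,P,Z\in\mathbb{H}_{\mathbb{F}}$ solve $$dX_t=-H_p(X_t,P_t+\varpi_t)\,dt,\quad X_0=x_0,\qquad dP_t=H_x(X_t,P_t+\varpi_t)\,dt+Z_t\,dW_t,\quad P_T=\Psi'(X_T)$$ on $[0,T]$. Then $v^*:=-H_p(X^*,P+\varpi)$ and $X^*$ satisfy, for every $\delta v\in\mathbb{H}_{\mathbb{F}}$ with $\delta X_t=\int_0^t\delta v_sds$, $$\mathbb{E}\left[\int_0^T\Big(L_x(X^*_t,v^*_t)\delta X_t+\big(L_v(X^*_t,v^*_t)+\varpi_t\big)\delta v_t\Big)dt+\Psi'(X^*_T)\delta X_T\right]=0.$$ Furthermore, $P=-L_v(X^*,v^* )-\varpi$.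
   Context: Fix $T>0$ and a complete filtered probability space $(\Omega,\mathcal{F},\mathbb{F},\mathbb{P})$, where $\mathbb{F}$ is the standard filtration generated by a one-dimensional Brownian motion $W$. $\mathbb{H}_{\mathbb{F}}$ denotes the Hilbert space of measurable, $\mathbb{F}$-adapted processes $v:[0,T]\times\Omega\to\mathbb{R}$ with $\mathbb{E}[\int_0^T v_t^2dt]<\infty$. $L\ge0$. The Hamiltonian is $H(x,p)=\sup_{v\in\mathbb{R}}\{-pv-L(x,v)\}$. (A5) There are $\alpha>0$, $\beta\ge0$ with $\alpha|v|^2-\beta\le L(x,v)$ for all $x,v$. (A7) There is $C>0$ with $|H_p(x,p)|\le C(1+|p|)$ for all $(x,p)\in\mathbb{R}^2$. *)

theory Defs
  imports "HOL-Probability.Probability"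
begin

definition strictly_convex :: "(real \<Rightarrow> real) \<Rightarrow> bool" where
  "strictly_convex f \<longleftrightarrow>
     (\<forall>x y (u::real). x \<noteq> y \<longrightarrow> 0 < u \<longrightarrow> u < 1 \<longrightarrow>
        f (u * x + (1 - u) * y) < u * f x + (1 - u) * f y)"

definition C2_fun :: "(real \<times> real \<Rightarrow> real) \<Rightarrow> bool" where
  "C2_fun L \<longleftrightarrow>
     (\<exists>(D1 :: real \<times> real \<Rightarrow> ((real \<times> real) \<Rightarrow>\<^sub>L real))
       (D2 :: real \<times> real \<Rightarrow> ((real \<times> real) \<Rightarrow>\<^sub>L ((real \<times> real) \<Rightarrow>\<^sub>L real))).
        (\<forall>z. (L has_derivative blinfun_apply (D1 z)) (at z)) \<and>
        (\<forall>z. (D1 has_derivative blinfun_apply (D2 z)) (at z)) \<and>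
        continuous_on UNIV D2)"

definition Lx :: "(real \<times> real \<Rightarrow> real) \<Rightarrow> real \<Rightarrow> real \<Rightarrow> real" where
  "Lx L x v = deriv (\<lambda>y. L (y, v)) x"

definition Lv :: "(real \<times> real \<Rightarrow> real) \<Rightarrow> real \<Rightarrow> real \<Rightarrow> real" where
  "Lv L x v = deriv (\<lambda>w. L (x, w)) v"

definition Ham :: "(real \<times> real \<Rightarrow> real) \<Rightarrow> real \<Rightarrow> real \<Rightarrow> real" where
  "Ham L x p = (SUP v\<in>UNIV. - p * v - L (x, v))"

definition Hx :: "(real \<times> real \<Rightarrow> real) \<Rightarrow> real \<Rightarrow> real \<Rightarrow> real" where
  "Hx L x p = deriv (\<lambda>y. Ham L y p) x"

definition Hp :: "(real \<times> real \<Rightarrow> real) \<Rightarrow> real \<Rightarrow> real \<Rightarrow> real" where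
  "Hp L x p = deriv (\<lambda>q. Ham L x q) p"

definition nat_gen :: "'a measure \<Rightarrow> (real \<Rightarrow> 'a \<Rightarrow> real) \<Rightarrow> real \<Rightarrow> 'a set set" where
  "nat_gen M W t = {W s -` B \<inter> space M | s B. 0 \<le> s \<and> s \<le> t \<and> B \<in> sets borel}"

definition std_filtration :: "'a measure \<Rightarrow> (real \<Rightarrow> 'a \<Rightarrow> real) \<Rightarrow> real \<Rightarrow> 'a measure" where
  "std_filtration M W t = sigma (space M) (nat_gen M W t \<union> null_sets M)"

definition brownian_motion :: "'a measure \<Rightarrow> (real \<Rightarrow> 'a \<Rightarrow> real) \<Rightarrow> bool" where
  "brownian_motion M W \<longleftrightarrow>
     prob_space M \<and>
     (\<forall>t. W t \<in> borel_measurable M) \<and>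
     (\<forall>\<omega>\<in>space M. W 0 \<omega> = 0 \<and> continuous_on {0..} (\<lambda>t. W t \<omega>)) \<and>
     (\<forall>s t. 0 \<le> s \<longrightarrow> s < t \<longrightarrow>
        distributed M lborel (\<lambda>\<omega>. W t \<omega> - W s \<omega>)
           (\<lambda>x. ennreal (normal_density 0 (sqrt (t - s)) x)) \<and>
        prob_space.indep_set M (sigma_sets (space M) (nat_gen M W s))
           (sigma_sets (space M)
              {(\<lambda>\<omega>. W t \<omega> - W s \<omega>) -` B \<inter> space M | B. B \<in> sets borel}))"

definition H_F :: "'a measure \<Rightarrow> (real \<Rightarrow> 'a measure) \<Rightarrow> real \<Rightarrow> (real \<Rightarrow> 'a \<Rightarrow> real) \<Rightarrow> bool" where
  "H_F M F T v \<longleftrightarrow>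
     (\<lambda>(t, \<omega>). v t \<omega>) \<in> borel_measurable (restrict_space lborel {0..T} \<Otimes>\<^sub>M M) \<and>
     (\<forall>t\<in>{0..T}. v t \<in> borel_measurable (F t)) \<and>
     (\<integral>\<^sup>+ z. ennreal ((case z of (t, \<omega>) \<Rightarrow> v t \<omega>)\<^sup>2)
        \<partial>(restrict_space lborel {0..T} \<Otimes>\<^sub>M M)) < \<infinity>"

definition step_process :: "nat \<Rightarrow> (nat \<Rightarrow> real) \<Rightarrow> (nat \<Rightarrow> 'a \<Rightarrow> real) \<Rightarrow> real \<Rightarrow> 'a \<Rightarrow> real" where
  "step_process n ts xi t \<omega> = (\<Sum>i<n. (if ts i \<le> t \<and> t < ts (Suc i) then xi i \<omega> else 0))"

definition step_integral :: "nat \<Rightarrow> (nat \<Rightarrow> real) \<Rightarrow> (nat \<Rightarrow> 'a \<Rightarrow> real) \<Rightarrow> (real \<Rightarrow> 'a \<Rightarrow> real)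
    \<Rightarrow> real \<Rightarrow> 'a \<Rightarrow> real" where
  "step_integral n ts xi W t \<omega> =
     (\<Sum>i<n. xi i \<omega> * (W (min t (ts (Suc i))) \<omega> - W (min t (ts i)) \<omega>))"

definition simple_adapted :: "'a measure \<Rightarrow> (real \<Rightarrow> 'a measure) \<Rightarrow> real
    \<Rightarrow> nat \<Rightarrow> (nat \<Rightarrow> real) \<Rightarrow> (nat \<Rightarrow> 'a \<Rightarrow> real) \<Rightarrow> bool" where
  "simple_adapted M F T n ts xi \<longleftrightarrow>
     ts 0 = 0 \<and> ts n = T \<and> (\<forall>i<n. ts i < ts (Suc i)) \<and>
     (\<forall>i<n. xi i \<in> borel_measurable (F (ts i)) \<and> integrable M (\<lambda>\<omega>. (xi i \<omega>)\<^sup>2))"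

text \<open>I is (a version of) the Ito integral t |-> int_0^t Z dW on [0,T]:
  the L^2 limit of elementary integrals of simple adapted processes
  approximating Z in L^2(dt x dP).\<close>
definition ito_integral :: "'a measure \<Rightarrow> (real \<Rightarrow> 'a measure) \<Rightarrow> (real \<Rightarrow> 'a \<Rightarrow> real) \<Rightarrow> real
    \<Rightarrow> (real \<Rightarrow> 'a \<Rightarrow> real) \<Rightarrow> (real \<Rightarrow> 'a \<Rightarrow> real) \<Rightarrow> bool" where
  "ito_integral M F W T Z I \<longleftrightarrow>
     (\<exists>(n :: nat \<Rightarrow> nat) (ts :: nat \<Rightarrow> nat \<Rightarrow> real) (xi :: nat \<Rightarrow> nat \<Rightarrow> 'a \<Rightarrow> real).
        (\<forall>k. simple_adapted M F T (n k) (ts k) (xi k)) \<and>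
        (\<lambda>k. \<integral>\<^sup>+ \<omega>. (\<integral>\<^sup>+ t\<in>{0..T}.
              ennreal ((Z t \<omega> - step_process (n k) (ts k) (xi k) t \<omega>)\<^sup>2) \<partial>lborel) \<partial>M)
          \<longlonglongrightarrow> 0 \<and>
        (\<forall>t\<in>{0..T}. I t \<in> borel_measurable M \<and>
           (\<lambda>k. \<integral>\<^sup>+ \<omega>. ennreal ((I t \<omega> - step_integral (n k) (ts k) (xi k) W t \<omega>)\<^sup>2) \<partial>M)
             \<longlonglongrightarrow> 0))"

end

theory Submission
  imports Defs
begin

text \<open>Legendre duality for the strictly convex, coercive Lagrangian gives, via the envelope
  theorem, \<open>Lv L x (- Hp L x p) = - p\<close> and \<open>Lx L x (- Hp L x p) = - Hx L x p\<close>; the first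
  identity is already the second claim. Along \<open>v\<^sup>* = - Hp L X (P + \<varpi>)\<close> the integrand of the
  first variation therefore becomes \<open>- Hx \<cdot> \<delta>X - P \<cdot> \<delta>v\<close>. Fubini on the triangle
  \<open>s \<le> t\<close> moves the primitive \<open>\<delta>X\<close> onto \<open>Hx\<close>, and inserting the backward equation for
  \<open>P\<close> leaves \<open>E \<integral>\<^sub>0\<^sup>T \<delta>v\<^sub>s (I\<^sub>T - I\<^sub>s) ds\<close>, where \<open>I\<close> is the Ito integral of \<open>Z\<close>.
  This vanishes because \<open>\<delta>v\<^sub>s\<close> is \<open>\<F>\<^sub>s\<close>-measurable and the increments of \<open>I\<close> after \<open>s\<close>
  are orthogonal to \<open>L\<^sup>2(\<F>\<^sub>s)\<close>: for elementary integrals this is the independence of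
  Brownian increments from the past, and it passes to the \<open>L\<^sup>2\<close>-limit.\<close>

section \<open>Legendre duality for the Lagrangian\<close>

lemma C2_fun_imp_continuous_derivative:
  assumes "C2_fun L"
  obtains D :: "real \<times> real \<Rightarrow> ((real \<times> real) \<Rightarrow>\<^sub>L real)"
  where "\<And>z. (L has_derivative blinfun_apply (D z)) (at z)" "continuous_on UNIV D"
proof -
  from assms obtain D D2 where
    D: "\<forall>z. (L has_derivative blinfun_apply (D z)) (at z)" and
    D2: "\<forall>z. (D has_derivative blinfun_apply (D2 z)) (at z)"
    unfolding C2_fun_def by blast
  have "continuous_on UNIV D"
    using D2 by (meson continuous_at_imp_continuous_on has_derivative_continuous)
  with D that show ?thesis by blast
qed

lemma has_real_derivative_partial_fst:
  assumes "(f has_derivative blinfun_apply D) (at (x, v))"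
  shows "((\<lambda>y. f (y, v)) has_real_derivative blinfun_apply D (1, 0)) (at x)"
proof (rule has_derivative_imp_has_field_derivative)
  show "((\<lambda>y. f (y, v)) has_derivative (\<lambda>h. blinfun_apply D (h, 0))) (at x)"
    using has_derivative_compose[OF has_derivative_Pair[OF has_derivative_ident has_derivative_const] assms]
    by (simp add: o_def)
  show "h * blinfun_apply D (1, 0) = blinfun_apply D (h, 0)" for h
    using blinfun.scaleR_right[of D h "(1, 0)"] by simp
qed

lemma has_real_derivative_partial_snd:
  assumes "(f has_derivative blinfun_apply D) (at (x, v))"
  shows "((\<lambda>w. f (x, w)) has_real_derivative blinfun_apply D (0, 1)) (at v)"
proof (rule has_derivative_imp_has_field_derivative)
  show "((\<lambda>w. f (x, w)) has_derivative (\<lambda>h. blinfun_apply D (0, h))) (at v)"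
    using has_derivative_compose[OF has_derivative_Pair[OF has_derivative_const has_derivative_ident] assms]
    by (simp add: o_def)
  show "h * blinfun_apply D (0, 1) = blinfun_apply D (0, h)" for h
    using blinfun.scaleR_right[of D h "(0, 1)"] by simp
qed

text \<open>Danskin's envelope theorem: since \<open>m y\<close> maximises \<open>g y\<close>, the difference quotient of
  \<open>f\<close> is squeezed between those of \<open>g\<close> at the maximisers \<open>m x\<close> and \<open>m y\<close>.\<close>
lemma envelope_has_real_derivative:
  fixes f m :: "real \<Rightarrow> real" and g :: "real \<Rightarrow> real \<Rightarrow> real"
  assumes le_max: "\<And>y w. g y w \<le> f y" and max_at: "\<And>y. f y = g y (m y)"
    and cont: "isCont m x"
    and unif: "\<And>e. e > 0 \<Longrightarrow> \<exists>d>0. \<forall>y w. \<bar>y - x\<bar> < d \<longrightarrow> \<bar>w - m x\<bar> < d \<longrightarrow>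
                 \<bar>g y w - g x w - D * (y - x)\<bar> \<le> e * \<bar>y - x\<bar>"
  shows "(f has_real_derivative D) (at x)"
  unfolding has_field_derivative_def has_derivative_at_alt
proof (intro conjI allI impI)
  show "bounded_linear ((*) D)" by (rule bounded_linear_mult_right)
  fix e :: real assume "e > 0"
  then obtain d where d: "d > 0" "\<forall>y w. \<bar>y - x\<bar> < d \<longrightarrow> \<bar>w - m x\<bar> < d \<longrightarrow>
                 \<bar>g y w - g x w - D * (y - x)\<bar> \<le> e * \<bar>y - x\<bar>"
    using unif by blast
  obtain d' where d': "d' > 0" "\<forall>y. \<bar>y - x\<bar> < d' \<longrightarrow> \<bar>m y - m x\<bar> < d"
    using cont d(1) unfolding continuous_at_eps_delta dist_real_def by blast
  show "\<exists>d>0. \<forall>y. norm (y - x) < d \<longrightarrow> norm (f y - f x - D * (y - x)) \<le> e * norm (y - x)"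
  proof (intro exI[of _ "min d d'"] conjI allI impI)
    fix y assume "norm (y - x) < min d d'"
    then have y: "\<bar>y - x\<bar> < d" "\<bar>y - x\<bar> < d'" by auto
    have "g y (m x) - g x (m x) \<le> f y - f x" "f y - f x \<le> g y (m y) - g x (m y)"
      using le_max[of y "m x"] max_at[of x] le_max[of x "m y"] max_at[of y] by auto
    moreover have "\<bar>g y (m x) - g x (m x) - D * (y - x)\<bar> \<le> e * \<bar>y - x\<bar>"
      "\<bar>g y (m y) - g x (m y) - D * (y - x)\<bar> \<le> e * \<bar>y - x\<bar>"
      using d d' y by auto
    ultimately show "norm (f y - f x - D * (y - x)) \<le> e * norm (y - x)"
      by (simp add: abs_le_iff)
  qed (use d d' in auto)
qed

definition vstar :: "(real \<times> real \<Rightarrow> real) \<Rightarrow> real \<Rightarrow> real \<Rightarrow> real" where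
  "vstar L x p = (THE v. Lv L x v = - p)"

locale coercive_lagrangian =
  fixes L :: "real \<times> real \<Rightarrow> real" and \<alpha> \<beta> :: real
  assumes C2: "C2_fun L"
    and strictly_convex_L: "\<And>x. strictly_convex (\<lambda>v. L (x, v))"
    and coercive: "\<alpha> > 0" "\<And>x v. \<alpha> * v\<^sup>2 - \<beta> \<le> L (x, v)"
begin

lemma Lx_has_real_derivative: "((\<lambda>y. L (y, v)) has_real_derivative Lx L x v) (at x)"
proof -
  obtain D where "\<And>z. (L has_derivative blinfun_apply (D z)) (at z)"
    using C2_fun_imp_continuous_derivative[OF C2] by blast
  then show ?thesis
    using has_real_derivative_partial_fst DERIV_imp_deriv unfolding Lx_def by metis
qed

lemma Lv_has_real_derivative: "((\<lambda>w. L (x, w)) has_real_derivative Lv L x v) (at v)"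
proof -
  obtain D where "\<And>z. (L has_derivative blinfun_apply (D z)) (at z)"
    using C2_fun_imp_continuous_derivative[OF C2] by blast
  then show ?thesis
    using has_real_derivative_partial_snd DERIV_imp_deriv unfolding Lv_def by metis
qed

lemma continuous_on_Lx: "continuous_on UNIV (\<lambda>z. Lx L (fst z) (snd z))"
  and continuous_on_Lv: "continuous_on UNIV (\<lambda>z. Lv L (fst z) (snd z))"
proof -
  obtain D where D: "\<And>z. (L has_derivative blinfun_apply (D z)) (at z)" "continuous_on UNIV D"
    using C2_fun_imp_continuous_derivative[OF C2] by blast
  have "(\<lambda>z. Lx L (fst z) (snd z)) = (\<lambda>z. blinfun_apply (D z) (1, 0))"
    using D(1) has_real_derivative_partial_fst DERIV_imp_deriv unfolding Lx_def by fastforce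
  moreover have "continuous_on UNIV (\<lambda>z. blinfun_apply (D z) (1, 0))"
    using D(2) by (intro continuous_intros)
  ultimately show "continuous_on UNIV (\<lambda>z. Lx L (fst z) (snd z))" by metis
  have "(\<lambda>z. Lv L (fst z) (snd z)) = (\<lambda>z. blinfun_apply (D z) (0, 1))"
    using D(1) has_real_derivative_partial_snd DERIV_imp_deriv unfolding Lv_def by fastforce
  moreover have "continuous_on UNIV (\<lambda>z. blinfun_apply (D z) (0, 1))"
    using D(2) by (intro continuous_intros)
  ultimately show "continuous_on UNIV (\<lambda>z. Lv L (fst z) (snd z))" by metis
qed

lemma convex_on_L: "convex_on UNIV (\<lambda>v. L (x, v))"
proof (rule convex_onI)
  fix t a b :: real assume "0 < t" "t < 1"
  then show "L (x, (1 - t) *\<^sub>R a + t *\<^sub>R b) \<le> (1 - t) * L (x, a) + t * L (x, b)"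
    using strictly_convex_L[of x] unfolding strictly_convex_def
    by (cases "a = b") (auto simp: algebra_simps less_imp_le)
qed simp

lemma Lv_tangent: "Lv L x v * (w - v) \<le> L (x, w) - L (x, v)"
  using convex_on_imp_above_tangent[OF convex_on_L[of x], of v w "Lv L x v"]
    Lv_has_real_derivative[of x v]
  by simp

lemma Lv_strict_mono: "v < w \<Longrightarrow> Lv L x v < Lv L x w"
proof -
  assume "v < w"
  define m d where "m = (v + w) / 2" and "d = (w - v) / 2"
  have "d > 0" using \<open>v < w\<close> by (simp add: d_def)
  have "L (x, (1/2) * v + (1 - 1/2) * w) < (1/2) * L (x, v) + (1 - 1/2) * L (x, w)"
    using strictly_convex_L[of x] \<open>v < w\<close> unfolding strictly_convex_def
    by (elim allE[of _ v] allE[of _ w] allE[of _ "1/2"]) auto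
  then have "L (x, m) - L (x, v) < L (x, w) - L (x, m)"
    by (simp add: m_def field_simps)
  moreover have "Lv L x v * d \<le> L (x, m) - L (x, v)" "L (x, w) - L (x, m) \<le> Lv L x w * d"
    using Lv_tangent[of x v m] Lv_tangent[of x w m]
    by (simp_all add: m_def d_def field_simps)
  ultimately have "Lv L x v * d < Lv L x w * d" by linarith
  then show ?thesis using \<open>d > 0\<close> by simp
qed

lemma Lv_mono: "v \<le> w \<Longrightarrow> Lv L x v \<le> Lv L x w"
  using Lv_strict_mono[of v w x] by (cases "v = w") auto

lemma Lv_inj: "Lv L x v = Lv L x w \<Longrightarrow> v = w"
  using Lv_strict_mono[of v w x] Lv_strict_mono[of w v x] by (cases v w rule: linorder_cases) auto

text \<open>The tangent at \<open>v\<close> through \<open>0\<close>, together with coercivity, gives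
  \<open>Lv L x v * v \<ge> \<alpha> v\<^sup>2 - c\<^sub>0\<close>; so \<open>Lv L x\<close> is unbounded in both directions.\<close>
lemma Lv_surj: "\<exists>v. Lv L x v = c"
proof -
  define c0 where "c0 = \<beta> + L (x, 0)"
  have c0: "c0 \<ge> 0" using coercive(2)[where x = x and v = 0] by (simp add: c0_def)
  have key: "\<alpha> * v\<^sup>2 - c0 \<le> Lv L x v * v" for v
    using Lv_tangent[of x v 0] coercive(2)[where x = x and v = v] by (simp add: c0_def algebra_simps)
  define R where "R = (\<bar>c\<bar> + c0 + 1) / \<alpha> + 1"
  have R: "R \<ge> 1" "\<alpha> * R = \<bar>c\<bar> + c0 + 1 + \<alpha>"
    using coercive(1) c0 by (simp_all add: R_def field_simps)
  have "R * (\<alpha> * R - c0) \<le> R * Lv L x R" "R * (\<alpha> * R - c0) \<le> R * - Lv L x (- R)"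
    using key[of R] key[of "- R"] R(1) c0 mult_left_mono[of 1 R c0]
    by (simp_all add: power2_eq_square algebra_simps)
  then have "\<alpha> * R - c0 \<le> Lv L x R" "\<alpha> * R - c0 \<le> - Lv L x (- R)"
    using R(1) by (smt (verit) mult_le_cancel_left_pos mult_minus_right)+
  then have "Lv L x (- R) \<le> c" "c \<le> Lv L x R"
    using R(2) coercive(1) by linarith+
  moreover have "continuous_on {- R..R} ((\<lambda>z. Lv L (fst z) (snd z)) \<circ> Pair x)"
    by (intro continuous_on_compose continuous_intros continuous_on_subset[OF continuous_on_Lv]) auto
  ultimately show ?thesis
    using IVT'[of "Lv L x" "- R" c R] R(1) by (auto simp: o_def)
qed

lemma Lv_vstar: "Lv L x (vstar L x p) = - p"
proof -
  obtain v where v: "Lv L x v = - p" using Lv_surj by blast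
  then have "vstar L x p = v"
    unfolding vstar_def using Lv_inj by (intro the_equality) metis+
  then show ?thesis using v by simp
qed

lemma vstar_maximizes: "- p * v - L (x, v) \<le> - p * vstar L x p - L (x, vstar L x p)"
  using Lv_tangent[of x "vstar L x p" v] Lv_vstar[of x p] by (simp add: algebra_simps)

lemma Ham_eq: "Ham L x p = - p * vstar L x p - L (x, vstar L x p)"
  unfolding Ham_def by (rule cSup_eq_maximum) (use vstar_maximizes[of p _ x] in auto)

lemma vstar_between:
  assumes "Lv L x a < - p" "- p < Lv L x b"
  shows "a < vstar L x p" "vstar L x p < b"
  using Lv_mono[of b "vstar L x p" x] Lv_mono[of "vstar L x p" a x] assms Lv_vstar[of x p]
  by force+

lemma isCont_Lx: "isCont (\<lambda>z. Lx L (fst z) (snd z)) z"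
  using continuous_on_Lx continuous_on_eq_continuous_at[OF open_UNIV] by blast

lemma isCont_Lv_shift: "isCont (\<lambda>z. Lv L (fst z) b + snd z) u"
proof -
  have "isCont (\<lambda>z. Lv L (fst z) (snd z)) (fst u, b)"
    using continuous_on_Lv continuous_on_eq_continuous_at[OF open_UNIV] by blast
  then have "isCont ((\<lambda>z. Lv L (fst z) (snd z)) \<circ> (\<lambda>z. (fst z, b))) u"
    by (intro continuous_at_compose continuous_intros) simp
  then show ?thesis by (intro continuous_intros) (simp add: o_def)
qed

lemma isCont_vstar: "isCont (\<lambda>z. vstar L (fst z) (snd z)) z"
  unfolding isCont_def
proof (rule tendstoI)
  fix e :: real assume "e > 0"
  define v0 where "v0 = vstar L (fst z) (snd z)"
  have "Lv L (fst z) (v0 - e) + snd z < 0" "0 < Lv L (fst z) (v0 + e) + snd z"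
    using Lv_strict_mono[of "v0 - e" v0 "fst z"] Lv_strict_mono[of v0 "v0 + e" "fst z"]
      Lv_vstar[of "fst z" "snd z"] \<open>e > 0\<close>
    by (simp_all add: v0_def)
  then have "\<forall>\<^sub>F y in at z. Lv L (fst y) (v0 - e) + snd y < 0"
      "\<forall>\<^sub>F y in at z. 0 < Lv L (fst y) (v0 + e) + snd y"
    using isCont_Lv_shift[where b = "v0 - e" and u = z] isCont_Lv_shift[where b = "v0 + e" and u = z]
    unfolding isCont_def by (auto intro: order_tendstoD)
  then show "\<forall>\<^sub>F y in at z. dist (vstar L (fst y) (snd y)) v0 < e"
  proof eventually_elim
    case (elim y)
    then show ?case
      using vstar_between[of "fst y" "v0 - e" "snd y" "v0 + e"] by (simp add: dist_real_def abs_less_iff)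
  qed
qed

lemma Hp_eq: "Hp L x p = - vstar L x p"
proof -
  have "(Ham L x has_real_derivative - vstar L x p) (at p)"
  proof (rule envelope_has_real_derivative[where g = "\<lambda>q w. - q * w - L (x, w)" and m = "vstar L x"])
    show "- q * w - L (x, w) \<le> Ham L x q" for q w
      using vstar_maximizes[of q w x] Ham_eq[of x q] by simp
    show "Ham L x q = - q * vstar L x q - L (x, vstar L x q)" for q
      by (rule Ham_eq)
    have "isCont ((\<lambda>z. vstar L (fst z) (snd z)) \<circ> Pair x) p"
      by (intro continuous_at_compose continuous_intros isCont_vstar)
    then show "isCont (vstar L x) p" by (simp add: o_def)
    fix e :: real assume "e > 0"
    show "\<exists>d>0. \<forall>y w. \<bar>y - p\<bar> < d \<longrightarrow> \<bar>w - vstar L x p\<bar> < d \<longrightarrow>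
        \<bar>- y * w - L (x, w) - (- p * w - L (x, w)) - - vstar L x p * (y - p)\<bar> \<le> e * \<bar>y - p\<bar>"
    proof (intro exI[of _ e] conjI allI impI)
      fix y w assume "\<bar>w - vstar L x p\<bar> < e"
      then have "\<bar>y - p\<bar> * \<bar>w - vstar L x p\<bar> \<le> e * \<bar>y - p\<bar>"
        using mult_left_mono[of "\<bar>w - vstar L x p\<bar>" e "\<bar>y - p\<bar>"] by (simp add: mult.commute)
      then show "\<bar>- y * w - L (x, w) - (- p * w - L (x, w)) - - vstar L x p * (y - p)\<bar> \<le> e * \<bar>y - p\<bar>"
        by (simp add: abs_mult[symmetric] algebra_simps)
    qed (use \<open>e > 0\<close> in auto)
  qed
  then show ?thesis unfolding Hp_def by (rule DERIV_imp_deriv)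
qed

lemma L_mean_value_fst: "\<exists>\<xi>. \<bar>\<xi> - x\<bar> \<le> \<bar>y - x\<bar> \<and> L (y, w) - L (x, w) = (y - x) * Lx L \<xi> w"
proof (cases y x rule: linorder_cases)
  case less
  then obtain \<xi> where "y < \<xi>" "\<xi> < x" "L (x, w) - L (y, w) = (x - y) * Lx L \<xi> w"
    using MVT2[of y x "\<lambda>t. L (t, w)" "\<lambda>t. Lx L t w"] Lx_has_real_derivative by blast
  then show ?thesis by (intro exI[of _ \<xi>]) (auto simp: algebra_simps)
next
  case greater
  then obtain \<xi> where "x < \<xi>" "\<xi> < y" "L (y, w) - L (x, w) = (y - x) * Lx L \<xi> w"
    using MVT2[of x y "\<lambda>t. L (t, w)" "\<lambda>t. Lx L t w"] Lx_has_real_derivative by blast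
  then show ?thesis by (intro exI[of _ \<xi>]) auto
qed auto

lemma Hx_eq: "Hx L x p = - Lx L x (vstar L x p)"
proof -
  define v0 where "v0 = vstar L x p"
  have "((\<lambda>y. Ham L y p) has_real_derivative - Lx L x v0) (at x)"
  proof (rule envelope_has_real_derivative[where g = "\<lambda>y w. - p * w - L (y, w)" and m = "\<lambda>y. vstar L y p"])
    show "- p * w - L (y, w) \<le> Ham L y p" for y w
      using vstar_maximizes[of p w y] Ham_eq[of y p] by simp
    show "Ham L y p = - p * vstar L y p - L (y, vstar L y p)" for y
      by (rule Ham_eq)
    have "isCont ((\<lambda>z. vstar L (fst z) (snd z)) \<circ> (\<lambda>y. (y, p))) x"
      by (intro continuous_at_compose continuous_intros isCont_vstar)
    then show "isCont (\<lambda>y. vstar L y p) x" by (simp add: o_def)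
    fix e :: real assume "e > 0"
    then obtain d where "d > 0" and d: "\<And>z. dist z (x, v0) < d \<Longrightarrow> \<bar>Lx L (fst z) (snd z) - Lx L x v0\<bar> < e"
      using isCont_Lx[of "(x, v0)"] unfolding continuous_at_eps_delta dist_real_def by fastforce
    show "\<exists>d>0. \<forall>y w. \<bar>y - x\<bar> < d \<longrightarrow> \<bar>w - vstar L x p\<bar> < d \<longrightarrow>
        \<bar>- p * w - L (y, w) - (- p * w - L (x, w)) - - Lx L x v0 * (y - x)\<bar> \<le> e * \<bar>y - x\<bar>"
    proof (intro exI[of _ "d / 2"] conjI allI impI)
      fix y w assume yw: "\<bar>y - x\<bar> < d / 2" "\<bar>w - vstar L x p\<bar> < d / 2"
      obtain \<xi> where \<xi>: "\<bar>\<xi> - x\<bar> \<le> \<bar>y - x\<bar>" "L (y, w) - L (x, w) = (y - x) * Lx L \<xi> w"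
        using L_mean_value_fst by blast
      have "dist (\<xi>, w) (x, v0) \<le> dist \<xi> x + dist w v0"
        using norm_Pair_le[of "\<xi> - x" "w - v0"] by (simp add: dist_norm)
      also have "\<dots> < d" using \<xi>(1) yw by (simp add: dist_real_def v0_def)
      finally have "\<bar>Lx L \<xi> w - Lx L x v0\<bar> \<le> e"
        using d[of "(\<xi>, w)"] by simp
      then have "\<bar>y - x\<bar> * \<bar>Lx L \<xi> w - Lx L x v0\<bar> \<le> e * \<bar>y - x\<bar>"
        using mult_left_mono[of "\<bar>Lx L \<xi> w - Lx L x v0\<bar>" e "\<bar>y - x\<bar>"] by (simp add: mult.commute)
      then show "\<bar>- p * w - L (y, w) - (- p * w - L (x, w)) - - Lx L x v0 * (y - x)\<bar> \<le> e * \<bar>y - x\<bar>"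
        using \<xi>(2) by (simp add: abs_mult[symmetric] algebra_simps)
    qed (use \<open>d > 0\<close> in auto)
  qed
  then show ?thesis unfolding Hx_def v0_def by (rule DERIV_imp_deriv)
qed

lemma continuous_on_Hx: "continuous_on UNIV (\<lambda>z. Hx L (fst z) (snd z))"
proof -
  have "continuous_on UNIV (\<lambda>z. vstar L (fst z) (snd z))"
    using isCont_vstar by (simp add: continuous_on_eq_continuous_at)
  then have "continuous_on UNIV ((\<lambda>z. - Lx L (fst z) (snd z)) \<circ> (\<lambda>z. (fst z, vstar L (fst z) (snd z))))"
    by (intro continuous_on_compose continuous_intros continuous_on_subset[OF continuous_on_Lx]) auto
  then show ?thesis by (simp add: o_def Hx_eq)
qed

lemma Lv_neg_Hp: "Lv L x (- Hp L x p) = - p"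
  using Lv_vstar by (simp add: Hp_eq)

lemma Lx_neg_Hp: "Lx L x (- Hp L x p) = - Hx L x p"
  by (simp add: Hp_eq Hx_eq)

end

section \<open>Integration by parts against a primitive\<close>

lemma integrable_pair_mult:
  fixes k u :: "_ \<Rightarrow> real"
  assumes "sigma_finite_measure N" "sigma_finite_measure N'"
    and k: "integrable N k" and u: "integrable N' u"
  shows "integrable (N \<Otimes>\<^sub>M N') (\<lambda>(t, s). k t * u s)"
proof (rule integrableI_bounded)
  interpret N': sigma_finite_measure N' by fact
  have [measurable]: "k \<in> borel_measurable N" "u \<in> borel_measurable N'" using k u by auto
  show "(\<lambda>(t, s). k t * u s) \<in> borel_measurable (N \<Otimes>\<^sub>M N')" by measurable
  have "(\<integral>\<^sup>+ z. ennreal (norm (case z of (t, s) \<Rightarrow> k t * u s)) \<partial>(N \<Otimes>\<^sub>M N'))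
      = (\<integral>\<^sup>+ t. \<integral>\<^sup>+ s. ennreal (norm (k t)) * ennreal (norm (u s)) \<partial>N' \<partial>N)"
    by (subst N'.nn_integral_fst[symmetric]) (auto intro!: nn_integral_cong simp: abs_mult ennreal_mult)
  also have "\<dots> = (\<integral>\<^sup>+ t. ennreal (norm (k t)) \<partial>N) * (\<integral>\<^sup>+ s. ennreal (norm (u s)) \<partial>N')"
    by (simp add: nn_integral_cmult nn_integral_multc)
  also have "\<dots> < \<infinity>"
    using k u by (simp add: integrable_iff_bounded ennreal_mult_less_top)
  finally show "(\<integral>\<^sup>+ z. ennreal (norm (case z of (t, s) \<Rightarrow> k t * u s)) \<partial>(N \<Otimes>\<^sub>M N')) < \<infinity>" .
qed

lemma set_integral_Icc_upper:
  fixes u :: "real \<Rightarrow> real"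
  shows "t \<le> b \<Longrightarrow> (LINT s:{a..t}|lborel. u s) = (\<integral>s. indicator {..t} s * (indicator {a..b} s * u s) \<partial>lborel)"
  unfolding set_lebesgue_integral_def by (intro Bochner_Integration.integral_cong) (auto split: split_indicator)

lemma set_integral_Icc_lower:
  fixes k :: "real \<Rightarrow> real"
  shows "a \<le> s \<Longrightarrow> (LINT t:{s..b}|lborel. k t) = (\<integral>t. indicator {s..} t * (indicator {a..b} t * k t) \<partial>lborel)"
  unfolding set_lebesgue_integral_def by (intro Bochner_Integration.integral_cong) (auto split: split_indicator)

text \<open>Fubini on the triangle \<open>a \<le> s \<le> t \<le> b\<close>.\<close>
lemma set_integral_mult_primitive_swap:
  fixes k u :: "real \<Rightarrow> real"
  assumes k: "set_integrable lborel {a..b} k" and u: "set_integrable lborel {a..b} u"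
  shows "set_integrable lborel {a..b} (\<lambda>t. k t * (LINT s:{a..t}|lborel. u s))"
    "set_integrable lborel {a..b} (\<lambda>s. u s * (LINT t:{s..b}|lborel. k t))"
    "(LINT t:{a..b}|lborel. k t * (LINT s:{a..t}|lborel. u s))
      = (LINT s:{a..b}|lborel. u s * (LINT t:{s..b}|lborel. k t))"
proof -
  define K U where "K = (\<lambda>t. indicator {a..b} t * k t)" and "U = (\<lambda>s. indicator {a..b} s * u s)"
  have KU: "integrable lborel K" "integrable lborel U"
    using k u by (simp_all add: set_integrable_def K_def U_def)
  then have [measurable]: "K \<in> borel_measurable borel" "U \<in> borel_measurable borel" by auto
  define f where "f t s = (if s \<le> t then K t * U s else 0)" for t s
  have f: "integrable (lborel \<Otimes>\<^sub>M lborel) (case_prod f)"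
  proof (rule Bochner_Integration.integrable_bound)
    show "integrable (lborel \<Otimes>\<^sub>M lborel) (\<lambda>(t, s). K t * U s)"
      by (rule integrable_pair_mult[OF _ _ KU]) (auto intro: lborel.sigma_finite_measure_axioms)
    show "case_prod f \<in> borel_measurable (lborel \<Otimes>\<^sub>M lborel)"
      unfolding f_def split_beta' by measurable
  qed (auto simp: f_def)
  have fst: "(\<integral>s. f t s \<partial>lborel) = indicator {a..b} t * (k t * (LINT s:{a..t}|lborel. u s))" for t
  proof -
    have "(\<integral>s. f t s \<partial>lborel) = (\<integral>s. K t * (indicator {..t} s * U s) \<partial>lborel)"
      by (intro Bochner_Integration.integral_cong) (auto simp: f_def split: split_indicator)
    then show ?thesis
      using set_integral_Icc_upper[of t b a u] by (cases "t \<in> {a..b}") (simp_all add: K_def U_def)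
  qed
  have snd: "(\<integral>t. f t s \<partial>lborel) = indicator {a..b} s * (u s * (LINT t:{s..b}|lborel. k t))" for s
  proof -
    have "(\<integral>t. f t s \<partial>lborel) = (\<integral>t. U s * (indicator {s..} t * K t) \<partial>lborel)"
      by (intro Bochner_Integration.integral_cong) (auto simp: f_def split: split_indicator)
    then show ?thesis
      using set_integral_Icc_lower[of a s b k] by (cases "s \<in> {a..b}") (simp_all add: K_def U_def)
  qed
  show "set_integrable lborel {a..b} (\<lambda>t. k t * (LINT s:{a..t}|lborel. u s))"
    using lborel_pair.integrable_fst[OF f] by (simp add: set_integrable_def fst)
  show "set_integrable lborel {a..b} (\<lambda>s. u s * (LINT t:{s..b}|lborel. k t))"
    using lborel_pair.integrable_snd[OF f] by (simp add: set_integrable_def snd)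
  show "(LINT t:{a..b}|lborel. k t * (LINT s:{a..t}|lborel. u s))
      = (LINT s:{a..b}|lborel. u s * (LINT t:{s..b}|lborel. k t))"
    using lborel_pair.Fubini_integral[OF f] by (simp add: set_lebesgue_integral_def fst snd)
qed

context coercive_lagrangian
begin

text \<open>Along \<open>v = - Hp L x (p + w)\<close> the integrand collapses to \<open>- Hx \<cdot> \<delta>X - p \<cdot> \<delta>v\<close>
  (Legendre duality); the primitive \<open>\<delta>X\<close> is then moved onto \<open>Hx\<close> by Fubini.\<close>
lemma first_variation_eq:
  fixes x p w dv :: "real \<Rightarrow> real"
  assumes h: "set_integrable lborel {0..T} (\<lambda>t. Hx L (x t) (p t + w t))"
    and dv: "set_integrable lborel {0..T} dv" and p_dv: "set_integrable lborel {0..T} (\<lambda>t. p t * dv t)"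
  shows "(LINT t:{0..T}|lborel. Lx L (x t) (- Hp L (x t) (p t + w t)) * (LINT s:{0..t}|lborel. dv s)
            + (Lv L (x t) (- Hp L (x t) (p t + w t)) + w t) * dv t)
         + c * (LINT s:{0..T}|lborel. dv s)
       = (LINT s:{0..T}|lborel. dv s * (c - (LINT t:{s..T}|lborel. Hx L (x t) (p t + w t)) - p s))"
proof -
  define h where "h t = Hx L (x t) (p t + w t)" for t
  define dX where "dX t = (LINT s:{0..t}|lborel. dv s)" for t
  define J where "J s = (LINT t:{s..T}|lborel. h t)" for s
  note swap = set_integral_mult_primitive_swap[OF h[folded h_def] dv, folded dX_def J_def]
  have "Lx L (x t) (- Hp L (x t) (p t + w t)) * dX t + (Lv L (x t) (- Hp L (x t) (p t + w t)) + w t) * dv t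
      = - (h t * dX t + p t * dv t)" for t
    by (simp add: Lx_neg_Hp Lv_neg_Hp h_def algebra_simps)
  then have "(LINT t:{0..T}|lborel. Lx L (x t) (- Hp L (x t) (p t + w t)) * dX t
            + (Lv L (x t) (- Hp L (x t) (p t + w t)) + w t) * dv t)
      = - ((LINT t:{0..T}|lborel. h t * dX t) + (LINT t:{0..T}|lborel. p t * dv t))"
    by (simp only: set_integral_uminus[OF set_integral_add(1)[OF swap(1) p_dv]] set_integral_add(2)[OF swap(1) p_dv])
  also have "\<dots> = (LINT s:{0..T}|lborel. dv s * (c - J s - p s)) - c * (LINT s:{0..T}|lborel. dv s)"
  proof -
    have "(\<lambda>s. dv s * (c - J s - p s)) = (\<lambda>s. (c * dv s - dv s * J s) - p s * dv s)"
      by (auto simp: algebra_simps)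
    moreover have "set_integrable lborel {0..T} (\<lambda>s. c * dv s - dv s * J s)"
      using dv swap(2) by auto
    ultimately show ?thesis
      using dv swap(2,3) p_dv by (simp add: set_integral_diff)
  qed
  finally show ?thesis
    by (simp add: dX_def J_def h_def)
qed

end

section \<open>Square-integrable functions\<close>

lemma abs_mult_le_sum_squares: "\<bar>a * b\<bar> \<le> a\<^sup>2 + b\<^sup>2" for a b :: real
proof -
  have "2 * \<bar>a\<bar> * \<bar>b\<bar> \<le> a\<^sup>2 + b\<^sup>2"
    using sum_squares_bound[of "\<bar>a\<bar>" "\<bar>b\<bar>"] by (simp add: power2_eq_square)
  moreover have "0 \<le> \<bar>a\<bar> * \<bar>b\<bar>" by simp
  ultimately show ?thesis unfolding abs_mult by linarith
qed

lemma integrable_mult_of_square_integrable: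
  fixes f g :: "'a \<Rightarrow> real"
  assumes "f \<in> borel_measurable M" "g \<in> borel_measurable M"
    "integrable M (\<lambda>x. (f x)\<^sup>2)" "integrable M (\<lambda>x. (g x)\<^sup>2)"
  shows "integrable M (\<lambda>x. f x * g x)"
  by (rule Bochner_Integration.integrable_bound[of _ "\<lambda>x. (f x)\<^sup>2 + (g x)\<^sup>2"])
     (use assms abs_mult_le_sum_squares in auto)

lemma integrable_square_add:
  fixes f g :: "'a \<Rightarrow> real"
  assumes "f \<in> borel_measurable M" "g \<in> borel_measurable M"
    "integrable M (\<lambda>x. (f x)\<^sup>2)" "integrable M (\<lambda>x. (g x)\<^sup>2)"
  shows "integrable M (\<lambda>x. (f x + g x)\<^sup>2)"
proof -
  have "(\<lambda>x. (f x + g x)\<^sup>2) = (\<lambda>x. (f x)\<^sup>2 + (g x)\<^sup>2 + 2 * (f x * g x))"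
    by (simp add: power2_eq_square algebra_simps)
  then show ?thesis
    using assms integrable_mult_of_square_integrable[OF assms] by simp
qed

lemma integrable_square_sum:
  fixes f :: "nat \<Rightarrow> 'a \<Rightarrow> real"
  assumes "\<And>i. i \<in> I \<Longrightarrow> f i \<in> borel_measurable M"
    "\<And>i. i \<in> I \<Longrightarrow> integrable M (\<lambda>x. (f i x)\<^sup>2)"
  shows "integrable M (\<lambda>x. (\<Sum>i\<in>I. f i x)\<^sup>2)"
  using assms
proof (induction I rule: infinite_finite_induct)
  case (insert i I)
  then have "integrable M (\<lambda>x. (f i x + (\<Sum>i\<in>I. f i x))\<^sup>2)"
    by (intro integrable_square_add) auto
  then show ?case using insert by simp
qed simp_all

lemma integrable_of_square_integrable:
  fixes u :: "'a \<Rightarrow> real"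
  assumes "finite_measure N" "u \<in> borel_measurable N" "integrable N (\<lambda>x. (u x)\<^sup>2)"
  shows "integrable N u"
proof -
  interpret finite_measure N by fact
  show ?thesis
  proof (rule Bochner_Integration.integrable_bound)
    show "integrable N (\<lambda>x. 1 + (u x)\<^sup>2)" using assms(3) by simp
    have "\<bar>u x\<bar> \<le> 1 + (u x)\<^sup>2" for x
      using abs_mult_le_sum_squares[of 1 "u x"] by simp
    then show "AE x in N. norm (u x) \<le> norm (1 + (u x)\<^sup>2)" by simp
  qed (rule assms(2))
qed

lemma nn_integral_square_add_le:
  fixes f g :: "'a \<Rightarrow> real"
  assumes [measurable]: "f \<in> borel_measurable M" "g \<in> borel_measurable M"
  shows "(\<integral>\<^sup>+ x. ennreal ((f x + g x)\<^sup>2) \<partial>M)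
    \<le> 2 * (\<integral>\<^sup>+ x. ennreal ((f x)\<^sup>2) \<partial>M) + 2 * (\<integral>\<^sup>+ x. ennreal ((g x)\<^sup>2) \<partial>M)"
proof -
  have "ennreal ((f x + g x)\<^sup>2) \<le> 2 * ennreal ((f x)\<^sup>2) + 2 * ennreal ((g x)\<^sup>2)" for x
  proof -
    have "(f x + g x)\<^sup>2 \<le> 2 * (f x)\<^sup>2 + 2 * (g x)\<^sup>2"
      using zero_le_power2[of "f x - g x"] by (simp add: power2_eq_square algebra_simps)
    then have "ennreal ((f x + g x)\<^sup>2) \<le> ennreal (2 * (f x)\<^sup>2 + 2 * (g x)\<^sup>2)"
      by (rule ennreal_leI)
    also have "\<dots> = ennreal 2 * ennreal ((f x)\<^sup>2) + ennreal 2 * ennreal ((g x)\<^sup>2)"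
      by (simp add: ennreal_plus ennreal_mult del: ennreal_numeral)
    finally show ?thesis by simp
  qed
  then have "(\<integral>\<^sup>+ x. ennreal ((f x + g x)\<^sup>2) \<partial>M)
      \<le> (\<integral>\<^sup>+ x. 2 * ennreal ((f x)\<^sup>2) + 2 * ennreal ((g x)\<^sup>2) \<partial>M)"
    by (intro nn_integral_mono)
  then show ?thesis by (simp add: nn_integral_add nn_integral_cmult)
qed

lemma nn_integral_square_add3_le:
  fixes f g h :: "'a \<Rightarrow> real"
  assumes [measurable]: "f \<in> borel_measurable M" "g \<in> borel_measurable M" "h \<in> borel_measurable M"
  shows "(\<integral>\<^sup>+ x. ennreal ((f x + g x + h x)\<^sup>2) \<partial>M)
    \<le> 3 * (\<integral>\<^sup>+ x. ennreal ((f x)\<^sup>2) \<partial>M) + 3 * (\<integral>\<^sup>+ x. ennreal ((g x)\<^sup>2) \<partial>M)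
      + 3 * (\<integral>\<^sup>+ x. ennreal ((h x)\<^sup>2) \<partial>M)"
proof -
  have "ennreal ((f x + g x + h x)\<^sup>2)
      \<le> 3 * ennreal ((f x)\<^sup>2) + 3 * ennreal ((g x)\<^sup>2) + 3 * ennreal ((h x)\<^sup>2)" for x
  proof -
    have "(f x + g x + h x)\<^sup>2 \<le> 3 * (f x)\<^sup>2 + 3 * (g x)\<^sup>2 + 3 * (h x)\<^sup>2"
      using zero_le_power2[of "f x - g x"] zero_le_power2[of "g x - h x"] zero_le_power2[of "f x - h x"]
      by (simp add: power2_eq_square algebra_simps)
    then have "ennreal ((f x + g x + h x)\<^sup>2) \<le> ennreal (3 * (f x)\<^sup>2 + 3 * (g x)\<^sup>2 + 3 * (h x)\<^sup>2)"
      by (rule ennreal_leI)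
    also have "\<dots> = ennreal 3 * ennreal ((f x)\<^sup>2) + ennreal 3 * ennreal ((g x)\<^sup>2) + ennreal 3 * ennreal ((h x)\<^sup>2)"
      by (simp add: ennreal_plus ennreal_mult del: ennreal_numeral)
    finally show ?thesis by simp
  qed
  then have "(\<integral>\<^sup>+ x. ennreal ((f x + g x + h x)\<^sup>2) \<partial>M)
      \<le> (\<integral>\<^sup>+ x. 3 * ennreal ((f x)\<^sup>2) + 3 * ennreal ((g x)\<^sup>2) + 3 * ennreal ((h x)\<^sup>2) \<partial>M)"
    by (intro nn_integral_mono)
  then show ?thesis by (simp add: nn_integral_add nn_integral_cmult)
qed

lemma tendsto_L2_diff:
  fixes f g :: "'a \<Rightarrow> real" and F G :: "nat \<Rightarrow> 'a \<Rightarrow> real"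
  assumes [measurable]: "f \<in> borel_measurable M" "g \<in> borel_measurable M"
    "\<And>k. F k \<in> borel_measurable M" "\<And>k. G k \<in> borel_measurable M"
    and f: "(\<lambda>k. \<integral>\<^sup>+ x. ennreal ((f x - F k x)\<^sup>2) \<partial>M) \<longlonglongrightarrow> 0"
    and g: "(\<lambda>k. \<integral>\<^sup>+ x. ennreal ((g x - G k x)\<^sup>2) \<partial>M) \<longlonglongrightarrow> 0"
  shows "(\<lambda>k. \<integral>\<^sup>+ x. ennreal (((f x - g x) - (F k x - G k x))\<^sup>2) \<partial>M) \<longlonglongrightarrow> 0"
proof -
  have bound: "(\<integral>\<^sup>+ x. ennreal (((f x - g x) - (F k x - G k x))\<^sup>2) \<partial>M)
      \<le> 2 * (\<integral>\<^sup>+ x. ennreal ((f x - F k x)\<^sup>2) \<partial>M) + 2 * (\<integral>\<^sup>+ x. ennreal ((g x - G k x)\<^sup>2) \<partial>M)" for k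
  proof -
    have "(\<integral>\<^sup>+ x. ennreal (((f x - g x) - (F k x - G k x))\<^sup>2) \<partial>M)
        = (\<integral>\<^sup>+ x. ennreal (((f x - F k x) + - (g x - G k x))\<^sup>2) \<partial>M)"
      by (simp add: algebra_simps)
    also have "\<dots> \<le> 2 * (\<integral>\<^sup>+ x. ennreal ((f x - F k x)\<^sup>2) \<partial>M)
        + 2 * (\<integral>\<^sup>+ x. ennreal ((- (g x - G k x))\<^sup>2) \<partial>M)"
      by (rule nn_integral_square_add_le) measurable
    finally show ?thesis by (simp only: power2_minus)
  qed
  have "(\<lambda>k. 2 * (\<integral>\<^sup>+ x. ennreal ((f x - F k x)\<^sup>2) \<partial>M) + 2 * (\<integral>\<^sup>+ x. ennreal ((g x - G k x)\<^sup>2) \<partial>M))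
      \<longlonglongrightarrow> 2 * 0 + 2 * 0"
    using f g by (intro tendsto_add ennreal_tendsto_cmult) auto
  then have "(\<lambda>k. 2 * (\<integral>\<^sup>+ x. ennreal ((f x - F k x)\<^sup>2) \<partial>M)
      + 2 * (\<integral>\<^sup>+ x. ennreal ((g x - G k x)\<^sup>2) \<partial>M)) \<longlonglongrightarrow> 0"
    by simp
  from tendsto_sandwich[OF _ _ tendsto_const this]
  show ?thesis by (simp add: bound)
qed

text \<open>By Cauchy--Schwarz,
  \<open>(\<integral> g Y)\<^sup>2 = (\<integral> g (Y - Y' k))\<^sup>2 \<le> \<integral> g\<^sup>2 \<cdot> \<integral> (Y - Y' k)\<^sup>2 \<longrightarrow> 0\<close>.\<close>
lemma integral_mult_eq_0_of_L2_limit: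
  fixes g Y :: "'a \<Rightarrow> real" and Y' :: "nat \<Rightarrow> 'a \<Rightarrow> real"
  assumes [measurable]: "g \<in> borel_measurable M" "Y \<in> borel_measurable M" "\<And>k. Y' k \<in> borel_measurable M"
    and g2: "integrable M (\<lambda>x. (g x)\<^sup>2)" and Y2: "integrable M (\<lambda>x. (Y x)\<^sup>2)"
    and Y'2: "\<And>k. integrable M (\<lambda>x. (Y' k x)\<^sup>2)"
    and orth: "\<And>k. (\<integral>x. g x * Y' k x \<partial>M) = 0"
    and lim: "(\<lambda>k. \<integral>\<^sup>+ x. ennreal ((Y x - Y' k x)\<^sup>2) \<partial>M) \<longlonglongrightarrow> 0"
  shows "(\<integral>x. g x * Y x \<partial>M) = 0"
proof -
  define r where "r = (\<integral>x. g x * Y x \<partial>M)"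
  define G where "G = (\<integral>\<^sup>+ x. ennreal ((g x)\<^sup>2) \<partial>M)"
  have "G < \<infinity>"
    using g2 by (simp add: G_def nn_integral_eq_integral)
  have bound: "ennreal (r\<^sup>2) \<le> G * (\<integral>\<^sup>+ x. ennreal ((Y x - Y' k x)\<^sup>2) \<partial>M)" for k
  proof -
    have int: "integrable M (\<lambda>x. g x * Y x)" "integrable M (\<lambda>x. g x * Y' k x)"
      using g2 Y2 Y'2 by (auto intro: integrable_mult_of_square_integrable)
    then have "integrable M (\<lambda>x. g x * (Y x - Y' k x))"
      by (simp add: right_diff_distrib)
    moreover have "r = (\<integral>x. g x * (Y x - Y' k x) \<partial>M)"
      using orth[of k] int by (simp add: r_def right_diff_distrib)
    ultimately have "ennreal \<bar>r\<bar> \<le> (\<integral>\<^sup>+ x. norm (g x * (Y x - Y' k x)) \<partial>M)"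
      using integral_norm_bound_ennreal by (metis real_norm_def)
    also have "\<dots> = (\<integral>\<^sup>+ x. ennreal \<bar>g x\<bar> * ennreal \<bar>Y x - Y' k x\<bar> \<partial>M)"
      by (intro nn_integral_cong) (simp add: abs_mult ennreal_mult)
    finally have "(ennreal \<bar>r\<bar>)\<^sup>2 \<le> (\<integral>\<^sup>+ x. ennreal \<bar>g x\<bar> * ennreal \<bar>Y x - Y' k x\<bar> \<partial>M)\<^sup>2"
      by (rule power_mono) simp
    then have "ennreal (r\<^sup>2) \<le> (\<integral>\<^sup>+ x. ennreal \<bar>g x\<bar> * ennreal \<bar>Y x - Y' k x\<bar> \<partial>M)\<^sup>2"
      by (simp add: ennreal_power)
    also have "\<dots> \<le> (\<integral>\<^sup>+ x. ennreal \<bar>g x\<bar> ^ 2 \<partial>M) * (\<integral>\<^sup>+ x. ennreal \<bar>Y x - Y' k x\<bar> ^ 2 \<partial>M)"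
      by (rule Cauchy_Schwarz_nn_integral) measurable
    finally show ?thesis
      by (simp add: G_def ennreal_power)
  qed
  have "(\<lambda>k. G * (\<integral>\<^sup>+ x. ennreal ((Y x - Y' k x)\<^sup>2) \<partial>M)) \<longlonglongrightarrow> G * 0"
    using ennreal_tendsto_cmult[OF _ lim] \<open>G < \<infinity>\<close> by simp
  then have "ennreal (r\<^sup>2) \<le> 0"
    using bound by (intro LIMSEQ_le_const) (auto simp: mult_zero_right)
  then show ?thesis
    by (simp add: r_def ennreal_le_iff2)
qed

lemma integral_eq_0_of_AE_eq:
  fixes f g :: "'a \<Rightarrow> real"
  assumes "AE x in M. f x = g x" "g \<in> borel_measurable M" "integral\<^sup>L M g = 0"
  shows "integral\<^sup>L M f = 0"
proof (cases "f \<in> borel_measurable M")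
  case True
  then have "integral\<^sup>L M f = integral\<^sup>L M g"
    using assms(2,1) by (rule integral_cong_AE)
  with assms(3) show ?thesis by simp
next
  case False
  then have "\<not> integrable M f" by auto
  then show ?thesis by (rule not_integrable_integral_eq)
qed

section \<open>Brownian motion and its standard filtration\<close>

lemma (in prob_space) indep_set_Un_null_sets:
  assumes "indep_set A B"
  shows "indep_set (A \<union> null_sets M) B"
proof (rule indep_setI)
  show "A \<union> null_sets M \<subseteq> events" "B \<subseteq> events"
    using indep_setD_ev1[OF assms] indep_setD_ev2[OF assms] by auto
  fix a b assume "a \<in> A \<union> null_sets M" "b \<in> B"
  moreover have "a \<inter> b \<in> null_sets M" if "a \<in> null_sets M" "b \<in> events" for a b
    using that by (meson Int_lower1 null_sets_subset sets.Int null_setsD2)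
  ultimately show "prob (a \<inter> b) = prob a * prob b"
    using indep_setD[OF assms] indep_setD_ev2[OF assms] by (auto simp: measure_eq_0_null_sets)
qed

lemma (in prob_space) Int_stable_Un_null_sets:
  assumes "Int_stable A" "A \<subseteq> events"
  shows "Int_stable (A \<union> null_sets M)"
  unfolding Int_stable_def
proof (intro ballI)
  fix a b assume "a \<in> A \<union> null_sets M" "b \<in> A \<union> null_sets M"
  moreover have "a \<inter> b \<in> null_sets M" "b \<inter> a \<in> null_sets M" if "a \<in> null_sets M" "b \<in> events" for a b
    using that by (meson Int_lower1 Int_lower2 null_sets_subset sets.Int null_setsD2)+
  ultimately show "a \<inter> b \<in> A \<union> null_sets M"
    using assms unfolding Int_stable_def by auto
qed

locale brownian =
  fixes M :: "'a measure" and W :: "real \<Rightarrow> 'a \<Rightarrow> real"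
  assumes brownian_motion: "brownian_motion M W"
begin

sublocale prob_space M
  using brownian_motion unfolding brownian_motion_def by blast

lemma W_measurable [measurable]: "W t \<in> borel_measurable M"
  using brownian_motion unfolding brownian_motion_def by blast

lemma nat_gen_subset_events: "nat_gen M W t \<subseteq> events"
  unfolding nat_gen_def using W_measurable by (auto intro: measurable_sets)

lemma space_std_filtration [simp]: "space (std_filtration M W t) = space M"
  unfolding std_filtration_def by (simp add: space_measure_of_conv)

lemma sets_std_filtration:
  "sets (std_filtration M W t) = sigma_sets (space M) (nat_gen M W t \<union> null_sets M)"
proof -
  have "nat_gen M W t \<union> null_sets M \<subseteq> Pow (space M)"
    using nat_gen_subset_events sets.sets_into_space by blast
  then show ?thesis unfolding std_filtration_def by (simp add: sets_measure_of_conv)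
qed

lemma subalgebra_std_filtration: "subalgebra M (std_filtration M W t)"
  unfolding subalgebra_def sets_std_filtration using nat_gen_subset_events[of t]
  by (intro conjI sets.sigma_sets_subset) auto

lemma measurable_from_std_filtration:
  "f \<in> borel_measurable (std_filtration M W t) \<Longrightarrow> f \<in> borel_measurable M"
  using subalgebra_std_filtration measurable_from_subalg by blast

lemma std_filtration_mono:
  "s \<le> t \<Longrightarrow> f \<in> borel_measurable (std_filtration M W s) \<Longrightarrow> f \<in> borel_measurable (std_filtration M W t)"
proof -
  assume "s \<le> t"
  then have "nat_gen M W s \<subseteq> nat_gen M W t"
    unfolding nat_gen_def by fastforce
  then have "sets (std_filtration M W s) \<subseteq> sets (std_filtration M W t)"
    unfolding sets_std_filtration by (intro sigma_sets_mono') blast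
  then show "f \<in> borel_measurable (std_filtration M W s) \<Longrightarrow> f \<in> borel_measurable (std_filtration M W t)"
    unfolding measurable_def by auto
qed

lemma W_measurable_std_filtration:
  "0 \<le> u \<Longrightarrow> u \<le> t \<Longrightarrow> W u \<in> borel_measurable (std_filtration M W t)"
  unfolding measurable_def sets_std_filtration
  by (auto simp: nat_gen_def intro!: sigma_sets.Basic)

definition increment_events :: "real \<Rightarrow> real \<Rightarrow> 'a set set" where
  "increment_events s t =
     sigma_sets (space M) {(\<lambda>\<omega>. W t \<omega> - W s \<omega>) -` B \<inter> space M | B. B \<in> sets borel}"

text \<open>Augmenting the natural filtration by null sets preserves independence of the future
  increments; this is why the standard (completed) filtration may be used.\<close>
lemma indep_set_std_filtration_increment:
  assumes "0 \<le> s" "s < t"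
  shows "indep_set (sets (std_filtration M W s)) (increment_events s t)"
proof -
  define A where "A = sigma_sets (space M) (nat_gen M W s)"
  have indep: "indep_set A (increment_events s t)"
    using brownian_motion assms unfolding brownian_motion_def A_def increment_events_def by blast
  have "sigma_algebra (space M) A"
    unfolding A_def using nat_gen_subset_events sets.sets_into_space
    by (intro sigma_algebra_sigma_sets) blast
  moreover have "sigma_algebra (space M) (increment_events s t)"
    unfolding increment_events_def by (intro sigma_algebra_sigma_sets) blast
  ultimately have "Int_stable A" "Int_stable (increment_events s t)"
    using algebra.Int_stable sigma_algebra_def by blast+
  then have "Int_stable (A \<union> null_sets M)"
    using Int_stable_Un_null_sets indep_setD_ev1[OF indep] by blast
  then have indep': "indep_set (sigma_sets (space M) (A \<union> null_sets M))
      (sigma_sets (space M) (increment_events s t))"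
    using indep_set_Un_null_sets[OF indep] \<open>Int_stable (increment_events s t)\<close>
    by (intro indep_set_sigma_sets)
  have "sets (std_filtration M W s) \<subseteq> sigma_sets (space M) (A \<union> null_sets M)"
    unfolding sets_std_filtration A_def by (rule sigma_sets_mono') (auto intro: sigma_sets.Basic)
  moreover have "increment_events s t \<subseteq> sigma_sets (space M) (increment_events s t)"
    by (rule sigma_sets_superset_generator)
  ultimately show ?thesis
    using indep' unfolding indep_set_def
    by (elim indep_sets_mono_sets) (auto split: bool.split)
qed

lemma indep_var_increment:
  assumes "0 \<le> s" "s < t" and X: "X \<in> borel_measurable (std_filtration M W s)"
  shows "indep_var borel X borel (\<lambda>\<omega>. W t \<omega> - W s \<omega>)"
  unfolding indep_var_eq
proof (intro conjI)
  show "random_variable borel X"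
    using measurable_from_std_filtration[OF X] by simp
  show "random_variable borel (\<lambda>\<omega>. W t \<omega> - W s \<omega>)"
    by (intro borel_measurable_diff W_measurable)
  have "{X -` A \<inter> space M | A. A \<in> sets borel} \<subseteq> sets (std_filtration M W s)"
    using X unfolding measurable_def by auto
  from sets.sigma_sets_subset[OF this]
  have "sigma_sets (space M) {X -` A \<inter> space M | A. A \<in> sets borel} \<subseteq> sets (std_filtration M W s)"
    by simp
  with indep_set_std_filtration_increment[OF assms(1,2)]
  show "indep_set (sigma_sets (space M) {X -` A \<inter> space M | A. A \<in> sets borel})
      (sigma_sets (space M) {(\<lambda>\<omega>. W t \<omega> - W s \<omega>) -` A \<inter> space M | A. A \<in> sets borel})"
    unfolding indep_set_def increment_events_def
    by (elim indep_sets_mono_sets) (simp split: bool.split)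
qed

lemma increment_moments:
  assumes "0 \<le> s" "s < t"
  shows "integrable M (\<lambda>\<omega>. W t \<omega> - W s \<omega>)" "(\<integral>\<omega>. W t \<omega> - W s \<omega> \<partial>M) = 0"
    "integrable M (\<lambda>\<omega>. (W t \<omega> - W s \<omega>)\<^sup>2)" "(\<integral>\<omega>. (W t \<omega> - W s \<omega>)\<^sup>2 \<partial>M) = t - s"
proof -
  have D: "distributed M lborel (\<lambda>\<omega>. W t \<omega> - W s \<omega>) (\<lambda>x. ennreal (normal_density 0 (sqrt (t - s)) x))"
    using brownian_motion assms unfolding brownian_motion_def by blast
  have \<sigma>: "0 < sqrt (t - s)" using assms by simp
  show "integrable M (\<lambda>\<omega>. W t \<omega> - W s \<omega>)"
    using distributed_integrable[OF D, of "\<lambda>x. x"] integrable_normal_moment_nz_1[OF \<sigma>, of 0]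
    by (simp add: normal_density_nonneg)
  show "integrable M (\<lambda>\<omega>. (W t \<omega> - W s \<omega>)\<^sup>2)"
    using distributed_integrable[OF D, of "\<lambda>x. x\<^sup>2"] integrable_normal_moment[OF \<sigma>, of 0 2]
    by (simp add: normal_density_nonneg)
  show mean: "(\<integral>\<omega>. W t \<omega> - W s \<omega> \<partial>M) = 0"
    using normal_distributed_expectation[OF \<sigma> D] by simp
  show "(\<integral>\<omega>. (W t \<omega> - W s \<omega>)\<^sup>2 \<partial>M) = t - s"
    using normal_distributed_variance[OF \<sigma> D] mean assms by simp
qed

lemma integral_mult_increment:
  assumes "0 \<le> s" "s < t"
    and X: "X \<in> borel_measurable (std_filtration M W s)" "integrable M X"
  shows "integrable M (\<lambda>\<omega>. X \<omega> * (W t \<omega> - W s \<omega>))"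
    "(\<integral>\<omega>. X \<omega> * (W t \<omega> - W s \<omega>) \<partial>M) = 0"
  using indep_var_integrable[OF indep_var_increment[OF assms(1-3)] X(2)]
    indep_var_lebesgue_integral[OF indep_var_increment[OF assms(1-3)] X(2)]
    increment_moments[OF assms(1,2)]
  by simp_all

lemma integral_mult_increment_sq:
  assumes "0 \<le> s" "s < t"
    and X: "X \<in> borel_measurable (std_filtration M W s)" "integrable M X"
  shows "integrable M (\<lambda>\<omega>. X \<omega> * (W t \<omega> - W s \<omega>)\<^sup>2)"
    "(\<integral>\<omega>. X \<omega> * (W t \<omega> - W s \<omega>)\<^sup>2 \<partial>M) = (\<integral>\<omega>. X \<omega> \<partial>M) * (t - s)"
proof -
  have "indep_var borel (id \<circ> X) borel (power2 \<circ> (\<lambda>\<omega>. W t \<omega> - W s \<omega>))"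
    by (rule indep_var_compose[OF indep_var_increment[OF assms(1-3)]]) auto
  then have "indep_var borel X borel (\<lambda>\<omega>. (W t \<omega> - W s \<omega>)\<^sup>2)"
    by (simp add: o_def)
  from indep_var_integrable[OF this X(2)] indep_var_lebesgue_integral[OF this X(2)]
  show "integrable M (\<lambda>\<omega>. X \<omega> * (W t \<omega> - W s \<omega>)\<^sup>2)"
    "(\<integral>\<omega>. X \<omega> * (W t \<omega> - W s \<omega>)\<^sup>2 \<partial>M) = (\<integral>\<omega>. X \<omega> \<partial>M) * (t - s)"
    using increment_moments[OF assms(1,2)] by simp_all
qed

end

section \<open>Elementary stochastic integrals\<close>

locale simple_adapted_process = brownian +
  fixes T :: real and n :: nat and ts :: "nat \<Rightarrow> real" and xi :: "nat \<Rightarrow> 'a \<Rightarrow> real"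
  assumes simple_adapted: "simple_adapted M (std_filtration M W) T n ts xi"
begin

lemma ts_0: "ts 0 = 0" and ts_n: "ts n = T" and ts_less: "i < n \<Longrightarrow> ts i < ts (Suc i)"
  and xi_adapted: "i < n \<Longrightarrow> xi i \<in> borel_measurable (std_filtration M W (ts i))"
  and xi_square_integrable: "i < n \<Longrightarrow> integrable M (\<lambda>\<omega>. (xi i \<omega>)\<^sup>2)"
  using simple_adapted unfolding simple_adapted_def by auto

lemma xi_measurable: "i < n \<Longrightarrow> xi i \<in> borel_measurable M"
  using xi_adapted measurable_from_std_filtration by blast

lemma ts_mono: "i \<le> j \<Longrightarrow> j \<le> n \<Longrightarrow> ts i \<le> ts j"
proof (induction j)
  case (Suc j)
  then show ?case
    using ts_less[of j] by (cases "i = Suc j") auto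
qed simp

lemma ts_nonneg: "i \<le> n \<Longrightarrow> 0 \<le> ts i" and ts_le_T: "i \<le> n \<Longrightarrow> ts i \<le> T"
  using ts_mono[of 0 i] ts_mono[of i n] ts_0 ts_n by auto

text \<open>\<open>tail_increment s i\<close> is the contribution of the \<open>i\<close>-th step to the elementary
  integral over \<open>[s, T]\<close>.\<close>
definition clamp :: "real \<Rightarrow> nat \<Rightarrow> real" where
  "clamp s i = max (ts i) (min s (ts (Suc i)))"

definition tail_increment :: "real \<Rightarrow> nat \<Rightarrow> 'a \<Rightarrow> real" where
  "tail_increment s i \<omega> = xi i \<omega> * (W (ts (Suc i)) \<omega> - W (clamp s i) \<omega>)"

lemma clamp_bounds:
  assumes "i < n"
  shows "ts i \<le> clamp s i" "clamp s i \<le> ts (Suc i)" "0 \<le> clamp s i"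
    "clamp s i < ts (Suc i) \<Longrightarrow> s \<le> clamp s i"
  using ts_less[OF assms] ts_nonneg[of i] assms unfolding clamp_def by auto

lemma tail_increment_eq_0: "i < n \<Longrightarrow> \<not> clamp s i < ts (Suc i) \<Longrightarrow> tail_increment s i \<omega> = 0"
  using clamp_bounds(2)[of i s] by (simp add: tail_increment_def)

lemma step_integral_diff_eq_sum_tail_increment:
  assumes "s \<le> T"
  shows "step_integral n ts xi W T \<omega> - step_integral n ts xi W s \<omega> = (\<Sum>i<n. tail_increment s i \<omega>)"
  unfolding step_integral_def sum_subtractf[symmetric]
proof (rule sum.cong[OF refl])
  fix i assume "i \<in> {..<n}"
  then have "ts i < ts (Suc i)" "ts (Suc i) \<le> T" using ts_less ts_le_T[of "Suc i"] by auto
  then show "xi i \<omega> * (W (min T (ts (Suc i))) \<omega> - W (min T (ts i)) \<omega>) -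
        xi i \<omega> * (W (min s (ts (Suc i))) \<omega> - W (min s (ts i)) \<omega>) = tail_increment s i \<omega>"
    unfolding tail_increment_def clamp_def using assms
    by (cases "s \<le> ts i"; cases "s \<le> ts (Suc i)") (auto simp: min_def max_def algebra_simps)
qed

lemma tail_increment_adapted:
  assumes "i < n"
  shows "tail_increment s i \<in> borel_measurable (std_filtration M W (ts (Suc i)))"
  unfolding tail_increment_def
proof (intro borel_measurable_times borel_measurable_diff)
  show "xi i \<in> borel_measurable (std_filtration M W (ts (Suc i)))"
    using std_filtration_mono[OF _ xi_adapted[OF assms]] ts_less[OF assms] by simp
  show "W (ts (Suc i)) \<in> borel_measurable (std_filtration M W (ts (Suc i)))"
    "W (clamp s i) \<in> borel_measurable (std_filtration M W (ts (Suc i)))"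
    using ts_nonneg[of "Suc i"] clamp_bounds[OF assms] assms
    by (auto intro: W_measurable_std_filtration)
qed

lemma tail_increment_measurable: "i < n \<Longrightarrow> tail_increment s i \<in> borel_measurable M"
  using tail_increment_adapted measurable_from_std_filtration by blast

lemma tail_increment_square:
  assumes "i < n"
  shows "integrable M (\<lambda>\<omega>. (tail_increment s i \<omega>)\<^sup>2)"
    "(\<integral>\<omega>. (tail_increment s i \<omega>)\<^sup>2 \<partial>M) \<le> (\<integral>\<omega>. (xi i \<omega>)\<^sup>2 \<partial>M) * (ts (Suc i) - ts i)"
proof -
  have "integrable M (\<lambda>\<omega>. (tail_increment s i \<omega>)\<^sup>2) \<and>
    (\<integral>\<omega>. (tail_increment s i \<omega>)\<^sup>2 \<partial>M) \<le> (\<integral>\<omega>. (xi i \<omega>)\<^sup>2 \<partial>M) * (ts (Suc i) - ts i)"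
  proof (cases "clamp s i < ts (Suc i)")
    case True
    have "(\<lambda>\<omega>. (xi i \<omega>)\<^sup>2) \<in> borel_measurable (std_filtration M W (clamp s i))"
      using std_filtration_mono[OF clamp_bounds(1)[OF assms] xi_adapted[OF assms]] by simp
    note moments = integral_mult_increment_sq[OF clamp_bounds(3)[OF assms] True this
        xi_square_integrable[OF assms]]
    have "(\<lambda>\<omega>. (tail_increment s i \<omega>)\<^sup>2) = (\<lambda>\<omega>. (xi i \<omega>)\<^sup>2 * (W (ts (Suc i)) \<omega> - W (clamp s i) \<omega>)\<^sup>2)"
      by (simp add: tail_increment_def power_mult_distrib)
    moreover have "(\<integral>\<omega>. (xi i \<omega>)\<^sup>2 \<partial>M) * (ts (Suc i) - clamp s i)
        \<le> (\<integral>\<omega>. (xi i \<omega>)\<^sup>2 \<partial>M) * (ts (Suc i) - ts i)"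
      using clamp_bounds(1)[OF assms] by (intro mult_left_mono) auto
    ultimately show ?thesis using moments by simp
  next
    case False
    then show ?thesis
      using tail_increment_eq_0[OF assms False] ts_less[OF assms] by simp
  qed
  then show "integrable M (\<lambda>\<omega>. (tail_increment s i \<omega>)\<^sup>2)"
    "(\<integral>\<omega>. (tail_increment s i \<omega>)\<^sup>2 \<partial>M) \<le> (\<integral>\<omega>. (xi i \<omega>)\<^sup>2 \<partial>M) * (ts (Suc i) - ts i)"
    by auto
qed

lemma integral_mult_tail_increment:
  assumes "i < n"
    and Y: "clamp s i < ts (Suc i) \<Longrightarrow> Y \<in> borel_measurable (std_filtration M W (clamp s i))"
    "Y \<in> borel_measurable M" "integrable M (\<lambda>\<omega>. (Y \<omega>)\<^sup>2)"
  shows "(\<integral>\<omega>. Y \<omega> * tail_increment s i \<omega> \<partial>M) = 0"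
proof (cases "clamp s i < ts (Suc i)")
  case True
  have "(\<lambda>\<omega>. Y \<omega> * xi i \<omega>) \<in> borel_measurable (std_filtration M W (clamp s i))"
    using Y(1)[OF True] std_filtration_mono[OF clamp_bounds(1)[OF assms(1)] xi_adapted[OF assms(1)]]
    by (intro borel_measurable_times)
  moreover have "integrable M (\<lambda>\<omega>. Y \<omega> * xi i \<omega>)"
    by (rule integrable_mult_of_square_integrable)
       (use Y xi_measurable xi_square_integrable assms in auto)
  moreover have "(\<lambda>\<omega>. Y \<omega> * tail_increment s i \<omega>)
      = (\<lambda>\<omega>. (Y \<omega> * xi i \<omega>) * (W (ts (Suc i)) \<omega> - W (clamp s i) \<omega>))"
    by (simp add: tail_increment_def mult.assoc)
  ultimately show ?thesis
    using integral_mult_increment(2)[OF clamp_bounds(3)[OF assms(1)] True] by simp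
qed (simp add: tail_increment_eq_0[OF assms(1)])

lemma tail_increments_orthogonal:
  assumes "i < j" "j < n"
  shows "(\<integral>\<omega>. tail_increment s i \<omega> * tail_increment s j \<omega> \<partial>M) = 0"
proof (rule integral_mult_tail_increment)
  have "ts (Suc i) \<le> clamp s j"
    using ts_mono[of "Suc i" j] clamp_bounds(1)[OF assms(2), of s] assms by linarith
  then show "tail_increment s i \<in> borel_measurable (std_filtration M W (clamp s j))"
    using assms by (intro std_filtration_mono[OF _ tail_increment_adapted]) auto
qed (use assms tail_increment_measurable tail_increment_square in auto)

lemma sum_tail_increment_square:
  shows "integrable M (\<lambda>\<omega>. (\<Sum>i<n. tail_increment s i \<omega>)\<^sup>2)"
    "(\<integral>\<omega>. (\<Sum>i<n. tail_increment s i \<omega>)\<^sup>2 \<partial>M) \<le> (\<Sum>i<n. (\<integral>\<omega>. (xi i \<omega>)\<^sup>2 \<partial>M) * (ts (Suc i) - ts i))"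
proof -
  show "integrable M (\<lambda>\<omega>. (\<Sum>i<n. tail_increment s i \<omega>)\<^sup>2)"
    by (rule integrable_square_sum) (auto intro: tail_increment_measurable tail_increment_square)
  have int: "integrable M (\<lambda>\<omega>. tail_increment s i \<omega> * tail_increment s j \<omega>)" if "i < n" "j < n" for i j
    using that by (intro integrable_mult_of_square_integrable tail_increment_measurable tail_increment_square)
  have diag: "(\<Sum>j<n. \<integral>\<omega>. tail_increment s i \<omega> * tail_increment s j \<omega> \<partial>M)
      = (\<integral>\<omega>. (tail_increment s i \<omega>)\<^sup>2 \<partial>M)" if "i < n" for i
  proof -
    have "(\<integral>\<omega>. tail_increment s i \<omega> * tail_increment s j \<omega> \<partial>M) = 0" if "j < n" "j \<noteq> i" for j
      using tail_increments_orthogonal[of i j s] tail_increments_orthogonal[of j i s] \<open>i < n\<close> that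
      by (cases "i < j") (simp_all add: mult.commute)
    then show ?thesis
      using \<open>i < n\<close> by (subst sum.remove[of _ i]) (auto simp: power2_eq_square)
  qed
  have "(\<integral>\<omega>. (\<Sum>i<n. tail_increment s i \<omega>)\<^sup>2 \<partial>M)
      = (\<integral>\<omega>. (\<Sum>i<n. \<Sum>j<n. tail_increment s i \<omega> * tail_increment s j \<omega>) \<partial>M)"
    by (simp add: power2_eq_square sum_product)
  also have "\<dots> = (\<Sum>i<n. \<integral>\<omega>. (\<Sum>j<n. tail_increment s i \<omega> * tail_increment s j \<omega>) \<partial>M)"
    by (rule Bochner_Integration.integral_sum) (auto intro!: Bochner_Integration.integrable_sum int)
  also have "\<dots> = (\<Sum>i<n. \<Sum>j<n. \<integral>\<omega>. tail_increment s i \<omega> * tail_increment s j \<omega> \<partial>M)"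
    by (rule sum.cong[OF refl], rule Bochner_Integration.integral_sum) (auto intro: int)
  also have "\<dots> = (\<Sum>i<n. \<integral>\<omega>. (tail_increment s i \<omega>)\<^sup>2 \<partial>M)"
    using diag by simp
  also have "\<dots> \<le> (\<Sum>i<n. (\<integral>\<omega>. (xi i \<omega>)\<^sup>2 \<partial>M) * (ts (Suc i) - ts i))"
    by (rule sum_mono) (auto intro: tail_increment_square)
  finally show "(\<integral>\<omega>. (\<Sum>i<n. tail_increment s i \<omega>)\<^sup>2 \<partial>M)
      \<le> (\<Sum>i<n. (\<integral>\<omega>. (xi i \<omega>)\<^sup>2 \<partial>M) * (ts (Suc i) - ts i))" .
qed

lemma integral_mult_sum_tail_increment:
  assumes "0 \<le> s" and g: "g \<in> borel_measurable (std_filtration M W s)" "integrable M (\<lambda>\<omega>. (g \<omega>)\<^sup>2)"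
  shows "(\<integral>\<omega>. g \<omega> * (\<Sum>i<n. tail_increment s i \<omega>) \<partial>M) = 0"
proof -
  have gM: "g \<in> borel_measurable M" by (rule measurable_from_std_filtration[OF g(1)])
  have "(\<integral>\<omega>. g \<omega> * tail_increment s i \<omega> \<partial>M) = 0" if "i < n" for i
    by (rule integral_mult_tail_increment[OF that _ gM g(2)])
       (rule std_filtration_mono[OF clamp_bounds(4)[OF that] g(1)])
  moreover have "integrable M (\<lambda>\<omega>. g \<omega> * tail_increment s i \<omega>)" if "i < n" for i
    using that g gM by (intro integrable_mult_of_square_integrable tail_increment_measurable tail_increment_square)
  ultimately show ?thesis
    by (simp add: sum_distrib_left Bochner_Integration.integral_sum)
qed

lemma step_interval_unique:
  assumes "i < n" "j < n" "ts i \<le> t" "t < ts (Suc i)" "ts j \<le> t" "t < ts (Suc j)"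
  shows "i = j"
  using ts_mono[of "Suc i" j] ts_mono[of "Suc j" i] assms by (cases i j rule: linorder_cases) auto

lemma step_process_square:
  "(step_process n ts xi t \<omega>)\<^sup>2 = (\<Sum>i<n. indicator {ts i..<ts (Suc i)} t * (xi i \<omega>)\<^sup>2)"
proof (cases "\<exists>k<n. ts k \<le> t \<and> t < ts (Suc k)")
  case True
  then obtain k where k: "k < n" "ts k \<le> t" "t < ts (Suc k)" by blast
  have other: "(ts i \<le> t \<and> t < ts (Suc i)) = False" if "i < n" "i \<noteq> k" for i
    using step_interval_unique[OF that(1) k(1) _ _ k(2,3)] that(2) by blast
  have "step_process n ts xi t \<omega> = xi k \<omega>"
    unfolding step_process_def using k by (subst sum.remove[of _ k]) (auto intro!: sum.neutral simp: other)
  moreover have "(\<Sum>i<n. indicator {ts i..<ts (Suc i)} t * (xi i \<omega>)\<^sup>2) = (xi k \<omega>)\<^sup>2"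
    using k by (subst sum.remove[of _ k]) (auto intro!: sum.neutral simp: indicator_def other)
  ultimately show ?thesis by simp
next
  case False
  then have "step_process n ts xi t \<omega> = 0" "(\<Sum>i<n. indicator {ts i..<ts (Suc i)} t * (xi i \<omega>)\<^sup>2) = 0"
    unfolding step_process_def by (intro sum.neutral; auto simp: indicator_def)+
  then show ?thesis by simp
qed

lemma nn_integral_step_process_square:
  "(\<integral>\<^sup>+ t\<in>{0..T}. ennreal ((step_process n ts xi t \<omega>)\<^sup>2) \<partial>lborel) =
     (\<Sum>i<n. ennreal ((xi i \<omega>)\<^sup>2 * (ts (Suc i) - ts i)))"
proof -
  have sub: "{ts i..<ts (Suc i)} \<subseteq> {0..T}" if "i < n" for i
    using ts_nonneg[of i] ts_le_T[of "Suc i"] that by auto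
  have pointwise: "ennreal ((step_process n ts xi t \<omega>)\<^sup>2) * indicator {0..T} t
      = (\<Sum>i<n. ennreal ((xi i \<omega>)\<^sup>2) * indicator {ts i..<ts (Suc i)} t)" for t
  proof -
    have "ennreal ((step_process n ts xi t \<omega>)\<^sup>2) * indicator {0..T} t
        = (\<Sum>i<n. ennreal (indicator {ts i..<ts (Suc i)} t * (xi i \<omega>)\<^sup>2)) * indicator {0..T} t"
      unfolding step_process_square by (subst sum_ennreal) auto
    also have "\<dots> = (\<Sum>i<n. ennreal ((xi i \<omega>)\<^sup>2) * indicator {ts i..<ts (Suc i)} t)"
      unfolding sum_distrib_right using sub by (intro sum.cong) (auto simp: indicator_def subset_iff)
    finally show ?thesis .
  qed
  have "(\<integral>\<^sup>+ t\<in>{0..T}. ennreal ((step_process n ts xi t \<omega>)\<^sup>2) \<partial>lborel)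
      = (\<integral>\<^sup>+ t. (\<Sum>i<n. ennreal ((xi i \<omega>)\<^sup>2) * indicator {ts i..<ts (Suc i)} t) \<partial>lborel)"
    by (intro nn_integral_cong) (rule pointwise)
  also have "\<dots> = (\<Sum>i<n. \<integral>\<^sup>+ t. ennreal ((xi i \<omega>)\<^sup>2) * indicator {ts i..<ts (Suc i)} t \<partial>lborel)"
    by (rule nn_integral_sum) auto
  also have "\<dots> = (\<Sum>i<n. ennreal ((xi i \<omega>)\<^sup>2 * (ts (Suc i) - ts i)))"
    using ts_less by (intro sum.cong) (auto simp: nn_integral_cmult_indicator ennreal_mult less_imp_le)
  finally show ?thesis .
qed

text \<open>The Ito isometry for elementary integrals, in the direction needed here.\<close>
lemma step_integral_increment_square_le:
  assumes "s \<le> T"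
  shows "(\<integral>\<^sup>+ \<omega>. ennreal ((step_integral n ts xi W T \<omega> - step_integral n ts xi W s \<omega>)\<^sup>2) \<partial>M) \<le>
    (\<integral>\<^sup>+ \<omega>. (\<integral>\<^sup>+ t\<in>{0..T}. ennreal ((step_process n ts xi t \<omega>)\<^sup>2) \<partial>lborel) \<partial>M)"
proof -
  have nonneg: "0 \<le> (\<integral>\<omega>. (xi i \<omega>)\<^sup>2 \<partial>M) * (ts (Suc i) - ts i)" if "i < n" for i
    using ts_less[OF that] by simp
  have "(\<integral>\<^sup>+ \<omega>. ennreal ((step_integral n ts xi W T \<omega> - step_integral n ts xi W s \<omega>)\<^sup>2) \<partial>M)
      = ennreal (\<integral>\<omega>. (\<Sum>i<n. tail_increment s i \<omega>)\<^sup>2 \<partial>M)"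
    using step_integral_diff_eq_sum_tail_increment[OF assms] sum_tail_increment_square(1)
    by (simp add: nn_integral_eq_integral)
  also have "\<dots> \<le> ennreal (\<Sum>i<n. (\<integral>\<omega>. (xi i \<omega>)\<^sup>2 \<partial>M) * (ts (Suc i) - ts i))"
    using sum_tail_increment_square(2) by (rule ennreal_leI)
  also have "\<dots> = (\<Sum>i<n. ennreal ((\<integral>\<omega>. (xi i \<omega>)\<^sup>2 \<partial>M) * (ts (Suc i) - ts i)))"
    by (rule sum_ennreal[symmetric]) (use nonneg in auto)
  also have "\<dots> = (\<Sum>i<n. \<integral>\<^sup>+ \<omega>. ennreal ((xi i \<omega>)\<^sup>2 * (ts (Suc i) - ts i)) \<partial>M)"
    using xi_square_integrable ts_less by (simp add: nn_integral_eq_integral less_imp_le)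
  also have "\<dots> = (\<integral>\<^sup>+ \<omega>. (\<Sum>i<n. ennreal ((xi i \<omega>)\<^sup>2 * (ts (Suc i) - ts i))) \<partial>M)"
    by (rule nn_integral_sum[symmetric]) (use xi_measurable in auto)
  also have "\<dots> = (\<integral>\<^sup>+ \<omega>. (\<integral>\<^sup>+ t\<in>{0..T}. ennreal ((step_process n ts xi t \<omega>)\<^sup>2) \<partial>lborel) \<partial>M)"
    by (simp add: nn_integral_step_process_square)
  finally show ?thesis .
qed

end

section \<open>Processes on \<open>[0, T] \<times> \<Omega>\<close>\<close>

abbreviation time_measure :: "real \<Rightarrow> real measure" where
  "time_measure T \<equiv> restrict_space lborel {0..T}"

lemma space_time_measure [simp]: "space (time_measure T) = {0..T}"
  by (simp add: space_restrict_space)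

lemma finite_measure_time_measure: "finite_measure (time_measure T)"
  by (rule finite_measureI) (cases "0 \<le> T"; simp add: emeasure_restrict_space)

lemma time_measure_id_measurable [measurable]: "(\<lambda>t. t) \<in> borel_measurable (time_measure T)"
  by (rule measurable_restrict_space1) simp

lemma nn_integral_time_measure:
  "(\<integral>\<^sup>+ t\<in>{0..T}. f t \<partial>lborel) = (\<integral>\<^sup>+ t. f t \<partial>time_measure T)"
  by (subst nn_integral_restrict_space) auto

lemma nn_integral_iterated_time_space:
  assumes "sigma_finite_measure M" "f \<in> borel_measurable (time_measure T \<Otimes>\<^sub>M M)"
  shows "(\<integral>\<^sup>+ \<omega>. (\<integral>\<^sup>+ t\<in>{0..T}. f (t, \<omega>) \<partial>lborel) \<partial>M) = (\<integral>\<^sup>+ z. f z \<partial>(time_measure T \<Otimes>\<^sub>M M))"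
proof -
  interpret time: finite_measure "time_measure T" by (rule finite_measure_time_measure)
  interpret pair_sigma_finite "time_measure T" M
    using assms(1) by (simp add: pair_sigma_finite_def time.sigma_finite_measure_axioms)
  show ?thesis
    using nn_integral_snd[OF assms(2)] by (simp add: nn_integral_time_measure)
qed

lemma set_integrable_iff_time_measure:
  "set_integrable lborel {0..T} f \<longleftrightarrow> integrable (time_measure T) f" for f :: "real \<Rightarrow> real"
  unfolding set_integrable_def by (subst integrable_restrict_space) auto

lemma set_integral_eq_time_measure:
  "(LINT s:{0..T}|lborel. f s) = (\<integral>s. f s \<partial>time_measure T)" for f :: "real \<Rightarrow> real"
  unfolding set_lebesgue_integral_def by (subst integral_restrict_space) auto

lemma step_process_measurable:
  assumes "\<And>i. i < n \<Longrightarrow> xi i \<in> borel_measurable M"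
  shows "(\<lambda>(t, \<omega>). step_process n ts xi t \<omega>) \<in> borel_measurable (time_measure T \<Otimes>\<^sub>M M)"
proof -
  have [measurable]: "(\<lambda>z. fst z) \<in> borel_measurable (time_measure T \<Otimes>\<^sub>M M)"
    by (rule measurable_compose[OF measurable_fst time_measure_id_measurable])
  have "(\<lambda>z. if ts i \<le> fst z \<and> fst z < ts (Suc i) then xi i (snd z) else 0)
      \<in> borel_measurable (time_measure T \<Otimes>\<^sub>M M)" if "i < n" for i
    using assms[OF that] by measurable
  then show ?thesis
    unfolding step_process_def split_beta' by (intro borel_measurable_sum) auto
qed

lemma step_integral_measurable:
  assumes "\<And>i. i < n \<Longrightarrow> xi i \<in> borel_measurable M" "\<And>t. W t \<in> borel_measurable M"
  shows "step_integral n ts xi W t \<in> borel_measurable M"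
  unfolding step_integral_def[abs_def] using assms
  by (intro borel_measurable_sum borel_measurable_times borel_measurable_diff) auto

lemma H_F_measurable: "H_F M F T v \<Longrightarrow> (\<lambda>(t, \<omega>). v t \<omega>) \<in> borel_measurable (time_measure T \<Otimes>\<^sub>M M)"
  and H_F_adapted: "H_F M F T v \<Longrightarrow> t \<in> {0..T} \<Longrightarrow> v t \<in> borel_measurable (F t)"
  and H_F_energy_product: "H_F M F T v \<Longrightarrow>
    (\<integral>\<^sup>+ z. ennreal ((case z of (t, \<omega>) \<Rightarrow> v t \<omega>)\<^sup>2) \<partial>(time_measure T \<Otimes>\<^sub>M M)) < \<infinity>"
  unfolding H_F_def by blast+

lemma H_F_section_measurable:
  assumes "H_F M F T v" "\<omega> \<in> space M"
  shows "(\<lambda>t. v t \<omega>) \<in> borel_measurable (time_measure T)"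
  using measurable_compose[OF measurable_Pair2'[OF assms(2)] H_F_measurable[OF assms(1)]] by simp

lemma H_F_energy_finite:
  assumes "H_F M F T v" "sigma_finite_measure M"
  shows "(\<integral>\<^sup>+ \<omega>. (\<integral>\<^sup>+ t\<in>{0..T}. ennreal ((v t \<omega>)\<^sup>2) \<partial>lborel) \<partial>M) < \<infinity>"
  using nn_integral_iterated_time_space[OF assms(2), of "\<lambda>z. ennreal ((case z of (t, \<omega>) \<Rightarrow> v t \<omega>)\<^sup>2)"]
    H_F_measurable[OF assms(1)] H_F_energy_product[OF assms(1)]
  by simp

lemma H_F_AE_square_integrable:
  assumes "H_F M F T v" "sigma_finite_measure M"
  shows "AE \<omega> in M. integrable (time_measure T) (\<lambda>t. (v t \<omega>)\<^sup>2)"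
proof -
  have [measurable]: "(\<lambda>(t, \<omega>). v t \<omega>) \<in> borel_measurable (time_measure T \<Otimes>\<^sub>M M)"
    using H_F_measurable[OF assms(1)] .
  interpret time: finite_measure "time_measure T" by (rule finite_measure_time_measure)
  have "(\<lambda>(t, \<omega>). ennreal ((v t \<omega>)\<^sup>2)) \<in> borel_measurable (time_measure T \<Otimes>\<^sub>M M)"
    by measurable
  from measurable_pair_swap[OF this]
  have "(\<lambda>\<omega>. \<integral>\<^sup>+ t. ennreal ((v t \<omega>)\<^sup>2) \<partial>time_measure T) \<in> borel_measurable M"
    by (intro time.borel_measurable_nn_integral_fst[where f = "\<lambda>(\<omega>, t). ennreal ((v t \<omega>)\<^sup>2)", simplified])
       (simp add: split_beta')
  moreover have "(\<integral>\<^sup>+ \<omega>. (\<integral>\<^sup>+ t. ennreal ((v t \<omega>)\<^sup>2) \<partial>time_measure T) \<partial>M) \<noteq> \<infinity>"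
    using H_F_energy_finite[OF assms] by (simp add: nn_integral_time_measure)
  ultimately have "AE \<omega> in M. (\<integral>\<^sup>+ t. ennreal ((v t \<omega>)\<^sup>2) \<partial>time_measure T) \<noteq> \<infinity>"
    by (rule nn_integral_PInf_AE)
  then show ?thesis
  proof (rule AE_mp, intro AE_I2 impI)
    fix \<omega> assume "\<omega> \<in> space M" "(\<integral>\<^sup>+ t. ennreal ((v t \<omega>)\<^sup>2) \<partial>time_measure T) \<noteq> \<infinity>"
    then show "integrable (time_measure T) (\<lambda>t. (v t \<omega>)\<^sup>2)"
      using H_F_section_measurable[OF assms(1)]
      by (intro integrableI_bounded) (auto simp: top.not_eq_extremum)
  qed
qed

lemma H_F_AE_set_integrable:
  assumes "H_F M F T v" "sigma_finite_measure M"
  shows "AE \<omega> in M. set_integrable lborel {0..T} (\<lambda>t. v t \<omega>)"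
  using H_F_AE_square_integrable[OF assms] AE_space
proof eventually_elim
  case (elim \<omega>)
  then show ?case
    using H_F_section_measurable[OF assms(1)] finite_measure_time_measure
    by (simp add: set_integrable_iff_time_measure integrable_of_square_integrable)
qed

lemma H_F_AE_set_integrable_mult:
  assumes "H_F M F T u" "H_F M F T v" "sigma_finite_measure M"
  shows "AE \<omega> in M. set_integrable lborel {0..T} (\<lambda>t. u t \<omega> * v t \<omega>)"
  using H_F_AE_square_integrable[OF assms(1,3)] H_F_AE_square_integrable[OF assms(2,3)] AE_space
proof eventually_elim
  case (elim \<omega>)
  then show ?case
    using H_F_section_measurable[OF assms(1)] H_F_section_measurable[OF assms(2)]
    by (simp add: set_integrable_iff_time_measure integrable_mult_of_square_integrable)
qed

lemma integrable_time_space_mult: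
  fixes v N :: "real \<Rightarrow> 'a \<Rightarrow> real"
  assumes "sigma_finite_measure M"
    and [measurable]: "(\<lambda>(s, \<omega>). v s \<omega>) \<in> borel_measurable (time_measure T \<Otimes>\<^sub>M M)"
      "(\<lambda>(s, \<omega>). N s \<omega>) \<in> borel_measurable (time_measure T \<Otimes>\<^sub>M M)"
    and v2: "(\<integral>\<^sup>+ z. ennreal ((case z of (s, \<omega>) \<Rightarrow> v s \<omega>)\<^sup>2) \<partial>(time_measure T \<Otimes>\<^sub>M M)) < \<infinity>"
    and N2: "\<And>s. s \<in> {0..T} \<Longrightarrow> (\<integral>\<^sup>+ \<omega>. ennreal ((N s \<omega>)\<^sup>2) \<partial>M) \<le> K" "K < \<infinity>"
  shows "integrable (time_measure T \<Otimes>\<^sub>M M) (\<lambda>(s, \<omega>). v s \<omega> * N s \<omega>)"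
proof (rule integrableI_bounded)
  interpret M: sigma_finite_measure M by fact
  interpret time: finite_measure "time_measure T" by (rule finite_measure_time_measure)
  show "(\<lambda>(s, \<omega>). v s \<omega> * N s \<omega>) \<in> borel_measurable (time_measure T \<Otimes>\<^sub>M M)" by measurable
  have "(\<lambda>z. ennreal ((case z of (s, \<omega>) \<Rightarrow> N s \<omega>)\<^sup>2)) \<in> borel_measurable (time_measure T \<Otimes>\<^sub>M M)"
    by measurable
  from M.nn_integral_fst[OF this]
  have "(\<integral>\<^sup>+ z. ennreal ((case z of (s, \<omega>) \<Rightarrow> N s \<omega>)\<^sup>2) \<partial>(time_measure T \<Otimes>\<^sub>M M))
      = (\<integral>\<^sup>+ s. (\<integral>\<^sup>+ \<omega>. ennreal ((N s \<omega>)\<^sup>2) \<partial>M) \<partial>time_measure T)"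
    by simp
  also have "\<dots> \<le> (\<integral>\<^sup>+ s. K \<partial>time_measure T)"
    using N2(1) by (intro nn_integral_mono) simp
  also have "\<dots> < \<infinity>"
  proof -
    have "emeasure (time_measure T) {0..T} < \<infinity>"
      using time.emeasure_finite[of "{0..T}"] by (simp add: less_top[symmetric])
    then show ?thesis using N2(2) by (simp add: ennreal_mult_less_top)
  qed
  finally have N_finite: "(\<integral>\<^sup>+ z. ennreal ((case z of (s, \<omega>) \<Rightarrow> N s \<omega>)\<^sup>2) \<partial>(time_measure T \<Otimes>\<^sub>M M)) < \<infinity>" .
  have "(\<integral>\<^sup>+ z. ennreal (norm (case z of (s, \<omega>) \<Rightarrow> v s \<omega> * N s \<omega>)) \<partial>(time_measure T \<Otimes>\<^sub>M M))
      \<le> (\<integral>\<^sup>+ z. ennreal ((case z of (s, \<omega>) \<Rightarrow> v s \<omega>)\<^sup>2)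
          + ennreal ((case z of (s, \<omega>) \<Rightarrow> N s \<omega>)\<^sup>2) \<partial>(time_measure T \<Otimes>\<^sub>M M))"
  proof (rule nn_integral_mono)
    fix z :: "real \<times> 'a"
    show "ennreal (norm (case z of (s, \<omega>) \<Rightarrow> v s \<omega> * N s \<omega>))
        \<le> ennreal ((case z of (s, \<omega>) \<Rightarrow> v s \<omega>)\<^sup>2) + ennreal ((case z of (s, \<omega>) \<Rightarrow> N s \<omega>)\<^sup>2)"
      using abs_mult_le_sum_squares[of "v (fst z) (snd z)" "N (fst z) (snd z)"]
      by (simp add: split_beta' ennreal_plus[symmetric] ennreal_leI del: ennreal_plus)
  qed
  also have "\<dots> = (\<integral>\<^sup>+ z. ennreal ((case z of (s, \<omega>) \<Rightarrow> v s \<omega>)\<^sup>2) \<partial>(time_measure T \<Otimes>\<^sub>M M))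
        + (\<integral>\<^sup>+ z. ennreal ((case z of (s, \<omega>) \<Rightarrow> N s \<omega>)\<^sup>2) \<partial>(time_measure T \<Otimes>\<^sub>M M))"
    by (rule nn_integral_add) measurable
  also have "\<dots> < \<infinity>"
    using v2 N_finite by (simp add: ennreal_add_less_top)
  finally show "(\<integral>\<^sup>+ z. ennreal (norm (case z of (s, \<omega>) \<Rightarrow> v s \<omega> * N s \<omega>)) \<partial>(time_measure T \<Otimes>\<^sub>M M)) < \<infinity>" .
qed

lemma integral_time_integral_eq_0:
  fixes v N :: "real \<Rightarrow> 'a \<Rightarrow> real"
  assumes "sigma_finite_measure M"
    and v [measurable]: "(\<lambda>(s, \<omega>). v s \<omega>) \<in> borel_measurable (time_measure T \<Otimes>\<^sub>M M)"
    and N [measurable]: "(\<lambda>(s, \<omega>). N s \<omega>) \<in> borel_measurable (time_measure T \<Otimes>\<^sub>M M)"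
    and v2: "(\<integral>\<^sup>+ z. ennreal ((case z of (s, \<omega>) \<Rightarrow> v s \<omega>)\<^sup>2) \<partial>(time_measure T \<Otimes>\<^sub>M M)) < \<infinity>"
    and N2: "\<And>s. s \<in> {0..T} \<Longrightarrow> (\<integral>\<^sup>+ \<omega>. ennreal ((N s \<omega>)\<^sup>2) \<partial>M) \<le> K" "K < \<infinity>"
    and orth: "\<And>s. s \<in> {0..T} \<Longrightarrow> integrable M (\<lambda>\<omega>. (v s \<omega>)\<^sup>2) \<Longrightarrow> (\<integral>\<omega>. v s \<omega> * N s \<omega> \<partial>M) = 0"
  shows "(\<integral>\<omega>. (LINT s:{0..T}|lborel. v s \<omega> * N s \<omega>) \<partial>M) = 0"
proof -
  interpret M: sigma_finite_measure M by fact
  interpret time: finite_measure "time_measure T" by (rule finite_measure_time_measure)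
  interpret pair_sigma_finite "time_measure T" M ..
  have "(\<integral>\<omega>. (LINT s:{0..T}|lborel. v s \<omega> * N s \<omega>) \<partial>M)
      = (\<integral>s. (\<integral>\<omega>. v s \<omega> * N s \<omega> \<partial>M) \<partial>time_measure T)"
    using Fubini_integral[OF integrable_time_space_mult[OF assms(1) v N v2 N2]]
    by (simp add: set_integral_eq_time_measure)
  also have "\<dots> = (\<integral>s. 0 \<partial>time_measure T)"
  proof (rule integral_cong_AE)
    have "(\<integral>\<^sup>+ s. (\<integral>\<^sup>+ \<omega>. ennreal ((v s \<omega>)\<^sup>2) \<partial>M) \<partial>time_measure T) \<noteq> \<infinity>"
      using v2 M.nn_integral_fst[of "\<lambda>z. ennreal ((case z of (s, \<omega>) \<Rightarrow> v s \<omega>)\<^sup>2)"]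
      by (simp add: split_beta')
    then have "AE s in time_measure T. (\<integral>\<^sup>+ \<omega>. ennreal ((v s \<omega>)\<^sup>2) \<partial>M) \<noteq> \<infinity>"
      by (intro nn_integral_PInf_AE) measurable
    then show "AE s in time_measure T. (\<integral>\<omega>. v s \<omega> * N s \<omega> \<partial>M) = 0"
    proof (rule AE_mp, intro AE_I2 impI)
      fix s assume s: "s \<in> space (time_measure T)"
        and "(\<integral>\<^sup>+ \<omega>. ennreal ((v s \<omega>)\<^sup>2) \<partial>M) \<noteq> \<infinity>"
      moreover have "(\<lambda>\<omega>. (v s \<omega>)\<^sup>2) \<in> borel_measurable M"
        using measurable_compose[OF measurable_Pair1'[OF s] v] by simp
      ultimately have "integrable M (\<lambda>\<omega>. (v s \<omega>)\<^sup>2)"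
        by (intro integrableI_bounded) (auto simp: top.not_eq_extremum)
      then show "(\<integral>\<omega>. v s \<omega> * N s \<omega> \<partial>M) = 0"
        using orth s by simp
    qed
  qed measurable
  finally show ?thesis by simp
qed

lemma set_integral_tail_eq_time_measure:
  fixes f :: "real \<Rightarrow> real"
  assumes "0 \<le> s"
  shows "(LINT t:{s..T}|lborel. f t) = (\<integral>t. indicator {s..T} t * f t \<partial>time_measure T)"
  unfolding set_lebesgue_integral_def using assms
  by (subst integral_restrict_space) (auto intro!: Bochner_Integration.integral_cong split: split_indicator)

lemma measurable_tail_integral:
  fixes h :: "real \<Rightarrow> 'a \<Rightarrow> real"
  assumes h [measurable]: "(\<lambda>(t, \<omega>). h t \<omega>) \<in> borel_measurable (time_measure T \<Otimes>\<^sub>M M)"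
  shows "(\<lambda>(s, \<omega>). LINT t:{s..T}|lborel. h t \<omega>) \<in> borel_measurable (time_measure T \<Otimes>\<^sub>M M)"
proof -
  interpret time: finite_measure "time_measure T" by (rule finite_measure_time_measure)
  let ?P = "(time_measure T \<Otimes>\<^sub>M M) \<Otimes>\<^sub>M time_measure T"
  have "(\<lambda>y. fst (fst y)) \<in> borel_measurable ?P" "(\<lambda>y. snd y) \<in> borel_measurable ?P"
    by (auto intro: measurable_compose[OF _ time_measure_id_measurable])
  moreover have "(\<lambda>y. h (snd y) (snd (fst y))) \<in> borel_measurable ?P"
    using measurable_compose[OF _ h, of "\<lambda>y. (snd y, snd (fst y))"] by simp
  ultimately have "(\<lambda>y. if fst (fst y) \<le> snd y \<and> snd y \<le> T then h (snd y) (snd (fst y)) else 0)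
      \<in> borel_measurable ?P"
    by measurable
  moreover have "(\<lambda>y. if fst (fst y) \<le> snd y \<and> snd y \<le> T then h (snd y) (snd (fst y)) else 0)
      = (\<lambda>(z, t). indicator {fst z..T} t * h t (snd z))"
    by (auto simp: indicator_def)
  ultimately have "(\<lambda>(z, t). indicator {fst z..T} t * h t (snd z)) \<in> borel_measurable ?P"
    by simp
  then have "(\<lambda>z. \<integral>t. indicator {fst z..T} t * h t (snd z) \<partial>time_measure T)
      \<in> borel_measurable (time_measure T \<Otimes>\<^sub>M M)"
    by (rule time.borel_measurable_lebesgue_integral[where f = "\<lambda>z t. indicator {fst z..T} t * h t (snd z)", simplified])
  then show ?thesis
    by (rule measurable_cong[THEN iffD1, rotated])
       (auto simp: space_pair_measure set_integral_tail_eq_time_measure)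
qed

lemma borel_measurable_time_integral:
  fixes f :: "real \<Rightarrow> 'a \<Rightarrow> real"
  assumes "(\<lambda>(s, \<omega>). f s \<omega>) \<in> borel_measurable (time_measure T \<Otimes>\<^sub>M M)"
  shows "(\<lambda>\<omega>. LINT s:{0..T}|lborel. f s \<omega>) \<in> borel_measurable M"
proof -
  interpret time: finite_measure "time_measure T" by (rule finite_measure_time_measure)
  have "(\<lambda>(\<omega>, s). f s \<omega>) \<in> borel_measurable (M \<Otimes>\<^sub>M time_measure T)"
    using measurable_pair_swap[OF assms] by (simp add: split_beta')
  then show ?thesis
    by (simp add: set_integral_eq_time_measure)
qed

section \<open>The Ito integral\<close>

locale ito_process = brownian +
  fixes T :: real and Z I :: "real \<Rightarrow> 'a \<Rightarrow> real"
  assumes T_nonneg: "0 \<le> T"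
    and Z_measurable [measurable]: "(\<lambda>(t, \<omega>). Z t \<omega>) \<in> borel_measurable (time_measure T \<Otimes>\<^sub>M M)"
    and Z_energy_finite: "(\<integral>\<^sup>+ \<omega>. (\<integral>\<^sup>+ t\<in>{0..T}. ennreal ((Z t \<omega>)\<^sup>2) \<partial>lborel) \<partial>M) < \<infinity>"
    and ito: "ito_integral M (std_filtration M W) W T Z I"
begin

abbreviation Z_energy :: ennreal where
  "Z_energy \<equiv> \<integral>\<^sup>+ \<omega>. (\<integral>\<^sup>+ t\<in>{0..T}. ennreal ((Z t \<omega>)\<^sup>2) \<partial>lborel) \<partial>M"

lemma ito_approximation:
  obtains n ts xi where "\<And>k. simple_adapted M (std_filtration M W) T (n k) (ts k) (xi k)"
    "(\<lambda>k. \<integral>\<^sup>+ \<omega>. (\<integral>\<^sup>+ t\<in>{0..T}.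
        ennreal ((Z t \<omega> - step_process (n k) (ts k) (xi k) t \<omega>)\<^sup>2) \<partial>lborel) \<partial>M) \<longlonglongrightarrow> 0"
    "\<And>t. t \<in> {0..T} \<Longrightarrow>
      (\<lambda>k. \<integral>\<^sup>+ \<omega>. ennreal ((I t \<omega> - step_integral (n k) (ts k) (xi k) W t \<omega>)\<^sup>2) \<partial>M) \<longlonglongrightarrow> 0"
  using ito unfolding ito_integral_def by blast

lemma I_measurable: "t \<in> {0..T} \<Longrightarrow> I t \<in> borel_measurable M"
  using ito unfolding ito_integral_def by blast

lemma step_process_energy_le:
  assumes "simple_adapted M (std_filtration M W) T n ts xi"
  shows "(\<integral>\<^sup>+ \<omega>. (\<integral>\<^sup>+ t\<in>{0..T}. ennreal ((step_process n ts xi t \<omega>)\<^sup>2) \<partial>lborel) \<partial>M) \<le>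
    2 * Z_energy + 2 * (\<integral>\<^sup>+ \<omega>. (\<integral>\<^sup>+ t\<in>{0..T}.
      ennreal ((Z t \<omega> - step_process n ts xi t \<omega>)\<^sup>2) \<partial>lborel) \<partial>M)"
proof -
  interpret simple_adapted_process M W T n ts xi
    using assms by unfold_locales
  have [measurable]: "(\<lambda>(t, \<omega>). step_process n ts xi t \<omega>) \<in> borel_measurable (time_measure T \<Otimes>\<^sub>M M)"
    by (rule step_process_measurable[OF xi_measurable])
  have iterated: "(\<integral>\<^sup>+ \<omega>. (\<integral>\<^sup>+ t\<in>{0..T}. ennreal ((f (t, \<omega>))\<^sup>2) \<partial>lborel) \<partial>M)
      = (\<integral>\<^sup>+ z. ennreal ((f z)\<^sup>2) \<partial>(time_measure T \<Otimes>\<^sub>M M))"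
    if [measurable]: "f \<in> borel_measurable (time_measure T \<Otimes>\<^sub>M M)" for f
    by (rule nn_integral_iterated_time_space) (auto intro: sigma_finite_measure_axioms)
  let ?\<phi> = "\<lambda>z. step_process n ts xi (fst z) (snd z)" and ?Z = "\<lambda>z. Z (fst z) (snd z)"
  have "(\<integral>\<^sup>+ z. ennreal ((?Z z + (?\<phi> z - ?Z z))\<^sup>2) \<partial>(time_measure T \<Otimes>\<^sub>M M))
      \<le> 2 * (\<integral>\<^sup>+ z. ennreal ((?Z z)\<^sup>2) \<partial>(time_measure T \<Otimes>\<^sub>M M))
        + 2 * (\<integral>\<^sup>+ z. ennreal ((?\<phi> z - ?Z z)\<^sup>2) \<partial>(time_measure T \<Otimes>\<^sub>M M))"
    by (rule nn_integral_square_add_le) (simp_all add: split_beta')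
  then show ?thesis
    using iterated[of ?\<phi>] iterated[of ?Z] iterated[of "\<lambda>z. ?Z z - ?\<phi> z"]
    by (simp add: split_beta' power2_commute)
qed

lemma ito_increment_square_le_approx:
  assumes s: "s \<in> {0..T}" and SA: "simple_adapted M (std_filtration M W) T n ts xi"
  shows "(\<integral>\<^sup>+ \<omega>. ennreal ((I T \<omega> - I s \<omega>)\<^sup>2) \<partial>M) \<le>
    3 * (\<integral>\<^sup>+ \<omega>. ennreal ((I T \<omega> - step_integral n ts xi W T \<omega>)\<^sup>2) \<partial>M) +
    3 * (\<integral>\<^sup>+ \<omega>. ennreal ((I s \<omega> - step_integral n ts xi W s \<omega>)\<^sup>2) \<partial>M) +
    3 * (2 * Z_energy + 2 * (\<integral>\<^sup>+ \<omega>. (\<integral>\<^sup>+ t\<in>{0..T}.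
      ennreal ((Z t \<omega> - step_process n ts xi t \<omega>)\<^sup>2) \<partial>lborel) \<partial>M))"
proof -
  interpret simple_adapted_process M W T n ts xi
    using SA by unfold_locales
  have [measurable]: "I T \<in> borel_measurable M" "I s \<in> borel_measurable M"
    "step_integral n ts xi W T \<in> borel_measurable M" "step_integral n ts xi W s \<in> borel_measurable M"
    using I_measurable[OF s] I_measurable[of T] T_nonneg
    by (auto intro: step_integral_measurable xi_measurable)
  have "(\<integral>\<^sup>+ \<omega>. ennreal ((I T \<omega> - I s \<omega>)\<^sup>2) \<partial>M) =
    (\<integral>\<^sup>+ \<omega>. ennreal (((I T \<omega> - step_integral n ts xi W T \<omega>) + (- (I s \<omega> - step_integral n ts xi W s \<omega>))
      + (step_integral n ts xi W T \<omega> - step_integral n ts xi W s \<omega>))\<^sup>2) \<partial>M)"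
    by (simp add: algebra_simps)
  also have "\<dots> \<le> 3 * (\<integral>\<^sup>+ \<omega>. ennreal ((I T \<omega> - step_integral n ts xi W T \<omega>)\<^sup>2) \<partial>M) +
    3 * (\<integral>\<^sup>+ \<omega>. ennreal ((I s \<omega> - step_integral n ts xi W s \<omega>)\<^sup>2) \<partial>M) +
    3 * (\<integral>\<^sup>+ \<omega>. ennreal ((step_integral n ts xi W T \<omega> - step_integral n ts xi W s \<omega>)\<^sup>2) \<partial>M)"
    using nn_integral_square_add3_le[of "\<lambda>\<omega>. I T \<omega> - step_integral n ts xi W T \<omega>" M
        "\<lambda>\<omega>. - (I s \<omega> - step_integral n ts xi W s \<omega>)"
        "\<lambda>\<omega>. step_integral n ts xi W T \<omega> - step_integral n ts xi W s \<omega>"]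
    by (simp only: power2_minus) simp
  also have "(\<integral>\<^sup>+ \<omega>. ennreal ((step_integral n ts xi W T \<omega> - step_integral n ts xi W s \<omega>)\<^sup>2) \<partial>M)
      \<le> 2 * Z_energy + 2 * (\<integral>\<^sup>+ \<omega>. (\<integral>\<^sup>+ t\<in>{0..T}.
        ennreal ((Z t \<omega> - step_process n ts xi t \<omega>)\<^sup>2) \<partial>lborel) \<partial>M)"
    using step_integral_increment_square_le step_process_energy_le[OF SA] s by (auto intro: order.trans)
  finally show ?thesis
    by (simp add: mult_left_mono add_left_mono)
qed

lemma ito_increment_square_le:
  assumes "s \<in> {0..T}"
  shows "(\<integral>\<^sup>+ \<omega>. ennreal ((I T \<omega> - I s \<omega>)\<^sup>2) \<partial>M) \<le> 6 * Z_energy"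
proof -
  obtain n ts xi where SA: "\<And>k. simple_adapted M (std_filtration M W) T (n k) (ts k) (xi k)"
    and Z_approx: "(\<lambda>k. \<integral>\<^sup>+ \<omega>. (\<integral>\<^sup>+ t\<in>{0..T}.
        ennreal ((Z t \<omega> - step_process (n k) (ts k) (xi k) t \<omega>)\<^sup>2) \<partial>lborel) \<partial>M) \<longlonglongrightarrow> 0"
    and I_approx: "\<And>t. t \<in> {0..T} \<Longrightarrow>
      (\<lambda>k. \<integral>\<^sup>+ \<omega>. ennreal ((I t \<omega> - step_integral (n k) (ts k) (xi k) W t \<omega>)\<^sup>2) \<partial>M) \<longlonglongrightarrow> 0"
    by (rule ito_approximation) blast
  have "(\<lambda>k. 3 * (\<integral>\<^sup>+ \<omega>. ennreal ((I T \<omega> - step_integral (n k) (ts k) (xi k) W T \<omega>)\<^sup>2) \<partial>M) +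
      3 * (\<integral>\<^sup>+ \<omega>. ennreal ((I s \<omega> - step_integral (n k) (ts k) (xi k) W s \<omega>)\<^sup>2) \<partial>M) +
      3 * (2 * Z_energy + 2 * (\<integral>\<^sup>+ \<omega>. (\<integral>\<^sup>+ t\<in>{0..T}.
        ennreal ((Z t \<omega> - step_process (n k) (ts k) (xi k) t \<omega>)\<^sup>2) \<partial>lborel) \<partial>M)))
    \<longlonglongrightarrow> 3 * 0 + 3 * 0 + 3 * (2 * Z_energy + 2 * 0)"
    using I_approx[of T] I_approx[OF assms] Z_approx T_nonneg
    by (intro tendsto_add ennreal_tendsto_cmult tendsto_const) auto
  then show ?thesis
    using ito_increment_square_le_approx[OF assms SA]
    by (intro LIMSEQ_le_const) (auto simp: mult.assoc[symmetric])
qed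

lemma ito_increment_square_integrable:
  assumes "s \<in> {0..T}"
  shows "integrable M (\<lambda>\<omega>. (I T \<omega> - I s \<omega>)\<^sup>2)"
proof (rule integrableI_bounded)
  show "(\<lambda>\<omega>. (I T \<omega> - I s \<omega>)\<^sup>2) \<in> borel_measurable M"
    using I_measurable[OF assms] I_measurable[of T] T_nonneg by simp
  have "(\<integral>\<^sup>+ \<omega>. ennreal ((I T \<omega> - I s \<omega>)\<^sup>2) \<partial>M) < \<infinity>"
    using ito_increment_square_le[OF assms] Z_energy_finite
    by (auto simp: ennreal_mult_less_top intro: le_less_trans)
  then show "(\<integral>\<^sup>+ \<omega>. ennreal (norm ((I T \<omega> - I s \<omega>)\<^sup>2)) \<partial>M) < \<infinity>" by simp
qed

text \<open>The martingale property of the Ito integral, in the weak form needed here.\<close>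
lemma ito_increment_orthogonal:
  assumes s: "s \<in> {0..T}"
    and g: "g \<in> borel_measurable (std_filtration M W s)" "integrable M (\<lambda>\<omega>. (g \<omega>)\<^sup>2)"
  shows "(\<integral>\<omega>. g \<omega> * (I T \<omega> - I s \<omega>) \<partial>M) = 0"
proof -
  obtain n ts xi where SA: "\<And>k. simple_adapted M (std_filtration M W) T (n k) (ts k) (xi k)"
    and I_approx: "\<And>t. t \<in> {0..T} \<Longrightarrow>
      (\<lambda>k. \<integral>\<^sup>+ \<omega>. ennreal ((I t \<omega> - step_integral (n k) (ts k) (xi k) W t \<omega>)\<^sup>2) \<partial>M) \<longlonglongrightarrow> 0"
    by (rule ito_approximation) blast
  have SAP: "simple_adapted_process M W T (n k) (ts k) (xi k)" for k
    using SA by (simp add: simple_adapted_process_def simple_adapted_process_axioms_def brownian_axioms)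
  define S where "S k t = step_integral (n k) (ts k) (xi k) W t" for k t
  have [measurable]: "S k t \<in> borel_measurable M" for k t
    unfolding S_def using simple_adapted_process.xi_measurable[OF SAP]
    by (intro step_integral_measurable W_measurable)
  have [measurable]: "I T \<in> borel_measurable M" "I s \<in> borel_measurable M"
    using I_measurable[OF s] I_measurable[of T] T_nonneg by auto
  have step_facts: "integrable M (\<lambda>\<omega>. (S k T \<omega> - S k s \<omega>)\<^sup>2)"
    "(\<integral>\<omega>. g \<omega> * (S k T \<omega> - S k s \<omega>) \<partial>M) = 0" for k
  proof -
    interpret simple_adapted_process M W T "n k" "ts k" "xi k"
      using SA by unfold_locales
    show "integrable M (\<lambda>\<omega>. (S k T \<omega> - S k s \<omega>)\<^sup>2)"
      "(\<integral>\<omega>. g \<omega> * (S k T \<omega> - S k s \<omega>) \<partial>M) = 0"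
      using sum_tail_increment_square(1) integral_mult_sum_tail_increment[OF _ g] s
      by (simp_all add: S_def step_integral_diff_eq_sum_tail_increment)
  qed
  have "(\<lambda>k. \<integral>\<^sup>+ \<omega>. ennreal (((I T \<omega> - I s \<omega>) - (S k T \<omega> - S k s \<omega>))\<^sup>2) \<partial>M) \<longlonglongrightarrow> 0"
    using T_nonneg
    by (intro tendsto_L2_diff I_approx[of T, folded S_def] I_approx[OF s, folded S_def]) auto
  from integral_mult_eq_0_of_L2_limit[OF measurable_from_std_filtration[OF g(1)] _ _ g(2)
      ito_increment_square_integrable[OF s] step_facts this]
  show ?thesis by measurable
qed

lemma integral_time_integral_mult_ito_increment:
  assumes dv: "H_F M (std_filtration M W) T dv"
    and N [measurable]: "(\<lambda>(s, \<omega>). N s \<omega>) \<in> borel_measurable (time_measure T \<Otimes>\<^sub>M M)"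
    and N_eq: "\<And>s. s \<in> {0..T} \<Longrightarrow> AE \<omega> in M. N s \<omega> = I T \<omega> - I s \<omega>"
  shows "(\<integral>\<omega>. (LINT s:{0..T}|lborel. dv s \<omega> * N s \<omega>) \<partial>M) = 0"
proof (rule integral_time_integral_eq_0[where K = "6 * Z_energy"])
  show "sigma_finite_measure M" by unfold_locales
  show "(\<lambda>(s, \<omega>). dv s \<omega>) \<in> borel_measurable (time_measure T \<Otimes>\<^sub>M M)"
    "(\<integral>\<^sup>+ z. ennreal ((case z of (s, \<omega>) \<Rightarrow> dv s \<omega>)\<^sup>2) \<partial>(time_measure T \<Otimes>\<^sub>M M)) < \<infinity>"
    using H_F_measurable[OF dv] H_F_energy_product[OF dv] by auto
  show "(\<lambda>(s, \<omega>). N s \<omega>) \<in> borel_measurable (time_measure T \<Otimes>\<^sub>M M)" by (rule N)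
  show "6 * Z_energy < \<infinity>"
    using Z_energy_finite by (simp add: ennreal_mult_less_top)
  fix s assume s: "s \<in> {0..T}"
  have [measurable]: "N s \<in> borel_measurable M" "I T \<in> borel_measurable M" "I s \<in> borel_measurable M"
    using measurable_compose[OF measurable_Pair1'[of s "time_measure T"] N] s I_measurable T_nonneg
    by auto
  show "(\<integral>\<^sup>+ \<omega>. ennreal ((N s \<omega>)\<^sup>2) \<partial>M) \<le> 6 * Z_energy"
    using ito_increment_square_le[OF s] N_eq[OF s]
    by (subst nn_integral_cong_AE[where v = "\<lambda>\<omega>. ennreal ((I T \<omega> - I s \<omega>)\<^sup>2)"]) auto
  assume "integrable M (\<lambda>\<omega>. (dv s \<omega>)\<^sup>2)"
  moreover have dv_s: "dv s \<in> borel_measurable (std_filtration M W s)"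
    using H_F_adapted[OF dv s] .
  moreover note [measurable] = measurable_from_std_filtration[OF dv_s]
  have "(\<integral>\<omega>. dv s \<omega> * N s \<omega> \<partial>M) = (\<integral>\<omega>. dv s \<omega> * (I T \<omega> - I s \<omega>) \<partial>M)"
    using N_eq[OF s] by (intro integral_cong_AE) auto
  ultimately show "(\<integral>\<omega>. dv s \<omega> * N s \<omega> \<partial>M) = 0"
    using ito_increment_orthogonal[OF s] by simp
qed

end

section \<open>The first-order condition\<close>

lemma continuous_on_deriv_C1:
  fixes f :: "real \<Rightarrow> real"
  assumes "f C1_differentiable_on UNIV"
  shows "continuous_on UNIV (deriv f)"
proof -
  obtain D where D: "\<forall>x. (f has_vector_derivative D x) (at x)" "continuous_on UNIV D"
    using assms unfolding C1_differentiable_on_def by blast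
  have "deriv f x = D x" for x
    using D(1) by (intro DERIV_imp_deriv) (simp add: has_real_derivative_iff_has_vector_derivative)
  then have "deriv f = D" ..
  with D(2) show ?thesis by simp
qed

lemma measurable_continuous_compose2:
  fixes f :: "real \<Rightarrow> real \<Rightarrow> real"
  assumes "continuous_on UNIV (\<lambda>z. f (fst z) (snd z))"
    and "a \<in> borel_measurable N" "b \<in> borel_measurable N"
  shows "(\<lambda>x. f (a x) (b x)) \<in> borel_measurable N"
proof -
  have "(\<lambda>x. (a x, b x)) \<in> measurable N (borel \<Otimes>\<^sub>M borel)"
    using assms(2,3) by (rule measurable_Pair)
  then have "(\<lambda>x. (a x, b x)) \<in> borel_measurable N"
    by (simp add: borel_prod)
  from measurable_compose[OF this borel_measurable_continuous_onI[OF assms(1)]]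
  show ?thesis by simp
qed

lemma (in coercive_lagrangian) measurable_Hx_along:
  assumes "(\<lambda>(t, \<omega>). X t \<omega>) \<in> borel_measurable N" "(\<lambda>(t, \<omega>). P t \<omega>) \<in> borel_measurable N"
    "(\<lambda>(t, \<omega>). w t \<omega>) \<in> borel_measurable N"
  shows "(\<lambda>(t, \<omega>). Hx L (X t \<omega>) (P t \<omega> + w t \<omega>)) \<in> borel_measurable N"
  using measurable_continuous_compose2[OF continuous_on_Hx, of "\<lambda>(t, \<omega>). X t \<omega>" N
      "\<lambda>(t, \<omega>). P t \<omega> + w t \<omega>"] assms
  by (simp add: split_beta')

lemma (in coercive_lagrangian) backward_residual_measurable:
  fixes X P w :: "real \<Rightarrow> 'a \<Rightarrow> real"
  assumes \<Psi>: "\<Psi> C1_differentiable_on UNIV" and "0 \<le> T"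
    and X: "(\<lambda>(t, \<omega>). X t \<omega>) \<in> borel_measurable (time_measure T \<Otimes>\<^sub>M M)"
    and P: "(\<lambda>(t, \<omega>). P t \<omega>) \<in> borel_measurable (time_measure T \<Otimes>\<^sub>M M)"
    and w: "(\<lambda>(t, \<omega>). w t \<omega>) \<in> borel_measurable (time_measure T \<Otimes>\<^sub>M M)"
  shows "(\<lambda>(s, \<omega>). deriv \<Psi> (X T \<omega>) - (LINT t:{s..T}|lborel. Hx L (X t \<omega>) (P t \<omega> + w t \<omega>)) - P s \<omega>)
    \<in> borel_measurable (time_measure T \<Otimes>\<^sub>M M)"
proof -
  have "X T \<in> borel_measurable M"
    using measurable_compose[OF measurable_Pair1'[of T "time_measure T"] X] \<open>0 \<le> T\<close> by simp
  from measurable_compose[OF this borel_measurable_continuous_onI[OF continuous_on_deriv_C1[OF \<Psi>]]]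
  have "(\<lambda>\<omega>. deriv \<Psi> (X T \<omega>)) \<in> borel_measurable M" by simp
  then have "(\<lambda>z. deriv \<Psi> (X T (snd z))
      - (\<lambda>(s, \<omega>). LINT t:{s..T}|lborel. Hx L (X t \<omega>) (P t \<omega> + w t \<omega>)) z
      - (\<lambda>(t, \<omega>). P t \<omega>) z) \<in> borel_measurable (time_measure T \<Otimes>\<^sub>M M)"
    by (intro borel_measurable_diff measurable_compose[OF measurable_snd]
        measurable_tail_integral[OF measurable_Hx_along[OF X P w]] P)
  then show ?thesis by (simp add: split_beta')
qed

text \<open>The adjoint identity in expectation: pathwise, the first variation equals
  \<open>\<integral>\<^sub>0\<^sup>T \<delta>v\<^sub>s (I\<^sub>T - I\<^sub>s) ds\<close>, whose expectation vanishes by the martingale property.\<close>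
lemma (in ito_process) expected_first_variation_eq_0:
  assumes "coercive_lagrangian L \<alpha> \<beta>" and \<Psi>: "\<Psi> C1_differentiable_on UNIV"
    and X: "(\<lambda>(t, \<omega>). X t \<omega>) \<in> borel_measurable (time_measure T \<Otimes>\<^sub>M M)"
    and w: "(\<lambda>(t, \<omega>). w t \<omega>) \<in> borel_measurable (time_measure T \<Otimes>\<^sub>M M)"
    and P: "H_F M (std_filtration M W) T P" and dv: "H_F M (std_filtration M W) T dv"
    and Hx_int: "AE \<omega> in M. set_integrable lborel {0..T} (\<lambda>t. Hx L (X t \<omega>) (P t \<omega> + w t \<omega>))"
    and P_eq: "\<forall>t\<in>{0..T}. AE \<omega> in M. P t \<omega> = deriv \<Psi> (X T \<omega>)
      - (LINT s:{t..T}|lborel. Hx L (X s \<omega>) (P s \<omega> + w s \<omega>)) - (I T \<omega> - I t \<omega>)"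
  shows "(\<integral>\<omega>. (LINT t:{0..T}|lborel. Lx L (X t \<omega>) (- Hp L (X t \<omega>) (P t \<omega> + w t \<omega>))
          * (LINT s:{0..t}|lborel. dv s \<omega>)
          + (Lv L (X t \<omega>) (- Hp L (X t \<omega>) (P t \<omega> + w t \<omega>)) + w t \<omega>) * dv t \<omega>)
        + deriv \<Psi> (X T \<omega>) * (LINT s:{0..T}|lborel. dv s \<omega>) \<partial>M) = 0"
proof (rule integral_eq_0_of_AE_eq)
  interpret coercive_lagrangian L \<alpha> \<beta> by fact
  define N where "N s \<omega> = deriv \<Psi> (X T \<omega>)
    - (LINT t:{s..T}|lborel. Hx L (X t \<omega>) (P t \<omega> + w t \<omega>)) - P s \<omega>" for s \<omega>
  have N_meas: "(\<lambda>(s, \<omega>). N s \<omega>) \<in> borel_measurable (time_measure T \<Otimes>\<^sub>M M)"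
    unfolding N_def using backward_residual_measurable[OF \<Psi> T_nonneg X H_F_measurable[OF P] w] .
  show "AE \<omega> in M. (LINT t:{0..T}|lborel. Lx L (X t \<omega>) (- Hp L (X t \<omega>) (P t \<omega> + w t \<omega>))
          * (LINT s:{0..t}|lborel. dv s \<omega>)
          + (Lv L (X t \<omega>) (- Hp L (X t \<omega>) (P t \<omega> + w t \<omega>)) + w t \<omega>) * dv t \<omega>)
        + deriv \<Psi> (X T \<omega>) * (LINT s:{0..T}|lborel. dv s \<omega>)
      = (LINT s:{0..T}|lborel. dv s \<omega> * N s \<omega>)"
    using Hx_int H_F_AE_set_integrable[OF dv sigma_finite_measure_axioms]
      H_F_AE_set_integrable_mult[OF P dv sigma_finite_measure_axioms]
    unfolding N_def by eventually_elim (rule first_variation_eq)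
  have "(\<lambda>z. (case z of (s, \<omega>) \<Rightarrow> dv s \<omega>) * (case z of (s, \<omega>) \<Rightarrow> N s \<omega>))
      \<in> borel_measurable (time_measure T \<Otimes>\<^sub>M M)"
    by (intro borel_measurable_times H_F_measurable[OF dv] N_meas)
  then show "(\<lambda>\<omega>. LINT s:{0..T}|lborel. dv s \<omega> * N s \<omega>) \<in> borel_measurable M"
    by (intro borel_measurable_time_integral) (simp add: split_beta')
  have "AE \<omega> in M. N s \<omega> = I T \<omega> - I s \<omega>" if "s \<in> {0..T}" for s
  proof -
    from P_eq that have "AE \<omega> in M. P s \<omega> = deriv \<Psi> (X T \<omega>)
      - (LINT t:{s..T}|lborel. Hx L (X t \<omega>) (P t \<omega> + w t \<omega>)) - (I T \<omega> - I s \<omega>)"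
      by blast
    then show ?thesis by eventually_elim (simp add: N_def)
  qed
  then show "(\<integral>\<omega>. (LINT s:{0..T}|lborel. dv s \<omega> * N s \<omega>) \<partial>M) = 0"
    using dv N_meas by (intro integral_time_integral_mult_ito_increment)
qed

theorem proposition3p5:
  fixes M :: "'a measure" and W :: "real \<Rightarrow> 'a \<Rightarrow> real"
    and T \<alpha> \<beta> C x0 :: real
    and L :: "real \<times> real \<Rightarrow> real" and \<Psi> :: "real \<Rightarrow> real"
    and varpi X P Z :: "real \<Rightarrow> 'a \<Rightarrow> real"
  defines "F \<equiv> std_filtration M W"
  assumes T_pos: "0 < T"
    and prob: "prob_space M"
    and complete: "complete_measure M"
    and BM: "brownian_motion M W"
    and L_nonneg: "\<forall>x v. 0 \<le> L (x, v)"
    and L_C2: "C2_fun L"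
    and L_strict_convex: "\<forall>x. strictly_convex (\<lambda>v. L (x, v))"
    and Psi_C1: "\<Psi> C1_differentiable_on UNIV"
    and A5: "0 < \<alpha>" "0 \<le> \<beta>" "\<forall>x v. \<alpha> * v\<^sup>2 - \<beta> \<le> L (x, v)"
    and A7: "0 < C" "\<forall>x p. \<bar>Hp L x p\<bar> \<le> C * (1 + \<bar>p\<bar>)"
    and varpi: "H_F M F T varpi"
    and HX: "H_F M F T X" and HP: "H_F M F T P" and HZ: "H_F M F T Z"
    and fwd_int: "AE \<omega> in M. set_integrable lborel {0..T}
                     (\<lambda>s. Hp L (X s \<omega>) (P s \<omega> + varpi s \<omega>))"
    and fwd: "\<forall>t\<in>{0..T}. AE \<omega> in M.
                X t \<omega> = x0 - (LINT s:{0..t}|lborel. Hp L (X s \<omega>) (P s \<omega> + varpi s \<omega>))"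
    and bwd_int: "AE \<omega> in M. set_integrable lborel {0..T}
                     (\<lambda>s. Hx L (X s \<omega>) (P s \<omega> + varpi s \<omega>))"
    and bwd: "\<exists>I. ito_integral M F W T Z I \<and>
                (\<forall>t\<in>{0..T}. AE \<omega> in M.
                   P t \<omega> = deriv \<Psi> (X T \<omega>)
                     - (LINT s:{t..T}|lborel. Hx L (X s \<omega>) (P s \<omega> + varpi s \<omega>))
                     - (I T \<omega> - I t \<omega>))"
  shows "(\<forall>\<delta>v. H_F M F T \<delta>v \<longrightarrow>
            (let vs = (\<lambda>t \<omega>. - Hp L (X t \<omega>) (P t \<omega> + varpi t \<omega>));
                 \<delta>X = (\<lambda>t \<omega>. LINT s:{0..t}|lborel. \<delta>v s \<omega>)
             in (\<integral>\<omega>. ((LINT t:{0..T}|lborel.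
                          Lx L (X t \<omega>) (vs t \<omega>) * \<delta>X t \<omega>
                          + (Lv L (X t \<omega>) (vs t \<omega>) + varpi t \<omega>) * \<delta>v t \<omega>)
                        + deriv \<Psi> (X T \<omega>) * \<delta>X T \<omega>) \<partial>M) = 0))
       \<and> (\<forall>t\<in>{0..T}. \<forall>\<omega>\<in>space M.
            P t \<omega> = - Lv L (X t \<omega>) (- Hp L (X t \<omega>) (P t \<omega> + varpi t \<omega>)) - varpi t \<omega>)"
proof -
  interpret coercive_lagrangian L \<alpha> \<beta>
    using L_C2 L_strict_convex A5 by unfold_locales auto
  obtain I where ito: "ito_integral M F W T Z I"
    and P_eq: "\<forall>t\<in>{0..T}. AE \<omega> in M. P t \<omega> = deriv \<Psi> (X T \<omega>)
      - (LINT s:{t..T}|lborel. Hx L (X s \<omega>) (P s \<omega> + varpi s \<omega>)) - (I T \<omega> - I t \<omega>)"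
    using bwd by blast
  interpret brownian M W
    using BM by unfold_locales
  interpret ito_process M W T Z I
    using T_pos ito H_F_measurable[OF HZ] H_F_energy_finite[OF HZ sigma_finite_measure_axioms]
    by unfold_locales (auto simp: F_def)
  have "H_F M F T \<delta>v \<Longrightarrow> (\<integral>\<omega>. (LINT t:{0..T}|lborel. Lx L (X t \<omega>) (- Hp L (X t \<omega>) (P t \<omega> + varpi t \<omega>))
          * (LINT s:{0..t}|lborel. \<delta>v s \<omega>)
          + (Lv L (X t \<omega>) (- Hp L (X t \<omega>) (P t \<omega> + varpi t \<omega>)) + varpi t \<omega>) * \<delta>v t \<omega>)
        + deriv \<Psi> (X T \<omega>) * (LINT s:{0..T}|lborel. \<delta>v s \<omega>) \<partial>M) = 0" for \<delta>v
    using H_F_measurable[OF HX] H_F_measurable[OF varpi] HP bwd_int P_eq unfolding F_def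
    by (intro expected_first_variation_eq_0[OF coercive_lagrangian_axioms Psi_C1]) auto
  then show ?thesis
    using Lv_neg_Hp by (simp add: Let_def)
qed

end
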